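(* Let $J\subseteq[n-1]$ with decomposition $J=J_1\sqcup\cdots\sqcup J_m$ into maximal sets of consecutive integers, and put $n_k=|J_k|+1$. Then $X_J\cong\prod_{k=1}^m\mathrm{Pet}_{n_k}$ as varieties.
   Context: $Fl_n=GL_n(\mathbb C)/B$ is the full flag variety of $\mathbb C^n$ and $X_w=\overline{BwB/B}$ the Schubert variety of $w\in\mathfrak S_n$. For any $r\ge2$, $\mathrm{Pet}_r=\{V_\bullet\in Fl_r: N_rV_i\subseteq V_{i+1},\ 1\le i\le r-1\}$ where $N_r$ is the $r\times r$ nilpotent Jordan block ($N_re_1=0$, $N_re_i=e_{i-1}$); $\mathrm{Pet}_1$ is a point. For $J\subseteq[n-1]$, $w_J$ is the longest element of the subgroup of $\mathfrak S_n$ generated by $\{s_i:i\in J\}$ and $X_J=X_{w_J}\cap\mathrm{Pet}_n$. *)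

theory Defs
  imports Complex_Main
begin

text \<open>Square complex matrices of size n are functions nat => nat => complex vanishing
outside the index range {..<n} x {..<n} (0-indexed; row/column i here is i+1 in the paper).\<close>

definition mats :: "nat \<Rightarrow> (nat \<Rightarrow> nat \<Rightarrow> complex) set" where
  "mats n = {g. \<forall>i j. (n \<le> i \<or> n \<le> j) \<longrightarrow> g i j = 0}"

definition mmult :: "nat \<Rightarrow> (nat \<Rightarrow> nat \<Rightarrow> complex) \<Rightarrow> (nat \<Rightarrow> nat \<Rightarrow> complex) \<Rightarrow> (nat \<Rightarrow> nat \<Rightarrow> complex)" where
  "mmult n A B = (\<lambda>i j. if i < n \<and> j < n then (\<Sum>l<n. A i l * B l j) else 0)"

definition idm :: "nat \<Rightarrow> nat \<Rightarrow> nat \<Rightarrow> complex" where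
  "idm n = (\<lambda>i j. if i < n \<and> j < n \<and> i = j then 1 else 0)"

definition GL :: "nat \<Rightarrow> (nat \<Rightarrow> nat \<Rightarrow> complex) set" where
  "GL n = {g \<in> mats n. \<exists>h \<in> mats n. mmult n g h = idm n}"

definition Bor :: "nat \<Rightarrow> (nat \<Rightarrow> nat \<Rightarrow> complex) set" where
  "Bor n = {b \<in> GL n. \<forall>i j. j < i \<longrightarrow> b i j = 0}"

definition flag_of :: "nat \<Rightarrow> (nat \<Rightarrow> nat \<Rightarrow> complex) \<Rightarrow> (nat \<Rightarrow> nat \<Rightarrow> complex) set" where
  "flag_of n g = {mmult n g b | b. b \<in> Bor n}"

definition Fl :: "nat \<Rightarrow> (nat \<Rightarrow> nat \<Rightarrow> complex) set set" where
  "Fl n = flag_of n ` GL n"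

definition fspace :: "nat \<Rightarrow> (nat \<Rightarrow> nat \<Rightarrow> complex) set \<Rightarrow> nat \<Rightarrow> (nat \<Rightarrow> complex) set" where
  "fspace n F i = {v. \<exists>g \<in> F. \<exists>c. v = (\<lambda>a. if a < n then (\<Sum>j<i. c j * g a j) else 0)}"

definition nilp :: "nat \<Rightarrow> (nat \<Rightarrow> complex) \<Rightarrow> (nat \<Rightarrow> complex)" where
  "nilp n v = (\<lambda>a. if a + 1 < n then v (a + 1) else 0)"

definition Pet :: "nat \<Rightarrow> (nat \<Rightarrow> nat \<Rightarrow> complex) set set" where
  "Pet n = {F \<in> Fl n. \<forall>i. 1 \<le> i \<and> i \<le> n - 1 \<longrightarrow> nilp n ` fspace n F i \<subseteq> fspace n F (i + 1)}"

text \<open>Simple transposition s_i (paper indexing i in [n-1]) acting on {0..<n}.\<close>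
definition sref :: "nat \<Rightarrow> nat \<Rightarrow> nat" where
  "sref i = (\<lambda>x. if x = i - 1 then i else if x = i then i - 1 else x)"

text \<open>The subgroup of S_n generated by s_i, i in J (finite group: generated monoid = subgroup).\<close>
inductive_set WJ :: "nat set \<Rightarrow> (nat \<Rightarrow> nat) set" for J where
  WJ_id: "id \<in> WJ J"
| WJ_step: "w \<in> WJ J \<Longrightarrow> i \<in> J \<Longrightarrow> w \<circ> sref i \<in> WJ J"

text \<open>Coxeter length = number of inversions.\<close>
definition perm_length :: "nat \<Rightarrow> (nat \<Rightarrow> nat) \<Rightarrow> nat" where
  "perm_length n w = card {(i, j). i < j \<and> j < n \<and> w j < w i}"

definition longest :: "nat \<Rightarrow> nat set \<Rightarrow> (nat \<Rightarrow> nat)" where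
  "longest n J = (THE w. w \<in> WJ J \<and> (\<forall>v \<in> WJ J. perm_length n v \<le> perm_length n w))"

definition pmat :: "nat \<Rightarrow> (nat \<Rightarrow> nat) \<Rightarrow> nat \<Rightarrow> nat \<Rightarrow> complex" where
  "pmat n w = (\<lambda>a b. if a < n \<and> b < n \<and> a = w b then 1 else 0)"

definition BwB :: "nat \<Rightarrow> (nat \<Rightarrow> nat) \<Rightarrow> (nat \<Rightarrow> nat \<Rightarrow> complex) set" where
  "BwB n w = {mmult n (mmult n b1 (pmat n w)) b2 | b1 b2. b1 \<in> Bor n \<and> b2 \<in> Bor n}"

text \<open>Schubert variety X_w = closure of BwB/B in Fl_n (quotient topology; its preimage in
GL_n is the closure of BwB in GL_n, GL_n -> Fl_n being open).\<close>
definition Schubert :: "nat \<Rightarrow> (nat \<Rightarrow> nat) \<Rightarrow> (nat \<Rightarrow> nat \<Rightarrow> complex) set set" where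
  "Schubert n w = {flag_of n g | g. g \<in> GL n \<and>
     (\<forall>e>0. \<exists>h \<in> BwB n w. \<forall>i<n. \<forall>j<n. cmod (g i j - h i j) < e)}"

definition XJ :: "nat \<Rightarrow> nat set \<Rightarrow> (nat \<Rightarrow> nat \<Rightarrow> complex) set set" where
  "XJ n J = Schubert n (longest n J) \<inter> Pet n"

text \<open>A point of Fl_{ns!0} x ... x Fl_{ns!(m-1)} is a list of flags; a lift is a family of
matrices G k in GL (ns!k) (G k = 0 for k >= m).\<close>

definition mflag :: "nat list \<Rightarrow> (nat \<Rightarrow> nat \<Rightarrow> nat \<Rightarrow> complex) \<Rightarrow> (nat \<Rightarrow> nat \<Rightarrow> complex) set list" where
  "mflag ns G = map (\<lambda>k. flag_of (ns ! k) (G k)) [0..<length ns]"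

definition lifts :: "nat list \<Rightarrow> (nat \<Rightarrow> nat \<Rightarrow> complex) set list set \<Rightarrow> (nat \<Rightarrow> nat \<Rightarrow> nat \<Rightarrow> complex) set" where
  "lifts ns X = {G. (\<forall>k < length ns. G k \<in> GL (ns ! k)) \<and> (\<forall>k. length ns \<le> k \<longrightarrow> G k = (\<lambda>i j. 0))
                    \<and> mflag ns G \<in> X}"

inductive_set polyfun :: "((nat \<Rightarrow> nat \<Rightarrow> nat \<Rightarrow> complex) \<Rightarrow> complex) set" where
  pf_const: "(\<lambda>G. c) \<in> polyfun"
| pf_coord: "(\<lambda>G. G k i j) \<in> polyfun"
| pf_add: "p \<in> polyfun \<Longrightarrow> q \<in> polyfun \<Longrightarrow> (\<lambda>G. p G + q G) \<in> polyfun"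
| pf_mult: "p \<in> polyfun \<Longrightarrow> q \<in> polyfun \<Longrightarrow> (\<lambda>G. p G * q G) \<in> polyfun"

text \<open>f : X -> Y is a morphism of (reduced) varieties: Zariski-locally on the preimage of X
in the product of GL's it lifts to a regular map into the product of GL's of the target
(denominators being absorbed into the scalar block factors, which do not change flags).\<close>
definition morphism :: "nat list \<Rightarrow> (nat \<Rightarrow> nat \<Rightarrow> complex) set list set \<Rightarrow> nat list
    \<Rightarrow> ((nat \<Rightarrow> nat \<Rightarrow> complex) set list \<Rightarrow> (nat \<Rightarrow> nat \<Rightarrow> complex) set list) \<Rightarrow> bool" where
  "morphism ns X ms f \<longleftrightarrow>
     (\<forall>G0 \<in> lifts ns X. \<exists>P q. q \<in> polyfun \<and> (\<forall>k i j. P k i j \<in> polyfun) \<and> q G0 \<noteq> 0 \<and>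
        (\<forall>G \<in> lifts ns X. q G \<noteq> 0 \<longrightarrow>
           (let H = (\<lambda>k i j. if k < length ms \<and> i < ms ! k \<and> j < ms ! k then P k i j G else 0)
            in (\<forall>k < length ms. H k \<in> GL (ms ! k)) \<and> mflag ms H = f (mflag ns G))))"

definition var_iso :: "nat list \<Rightarrow> (nat \<Rightarrow> nat \<Rightarrow> complex) set list set \<Rightarrow> nat list
    \<Rightarrow> (nat \<Rightarrow> nat \<Rightarrow> complex) set list set \<Rightarrow> bool" where
  "var_iso ns X ms Y \<longleftrightarrow> (\<exists>f. bij_betw f X Y \<and> morphism ns X ms f \<and> morphism ms Y ns (inv_into X f))"

definition prod_Pet :: "nat list \<Rightarrow> (nat \<Rightarrow> nat \<Rightarrow> complex) set list set" where
  "prod_Pet ns = {Fs. length Fs = length ns \<and> (\<forall>k < length ns. Fs ! k \<in> Pet (ns ! k))}"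

end

theory Submission
  imports Defs "Jordan_Normal_Form.Determinant"
begin

text \<open>
  Write P_J for the block upper triangular matrices whose diagonal blocks are the maximal
  runs of indices linked by J. The longest element w_J reverses every block, and B w_J B is
  dense in P_J: up to arbitrarily small errors every element of P_J is a product of an upper
  triangular matrix and a block lower triangular one (induction on the size, using Schur
  complements). Hence X_(w_J) = P_J/B.

  A flag gB lies in Pet_n iff g^-1 N g is upper Hessenberg. Every g in P_J factors as L u with
  u in B and L the block diagonal part of g, so gB = LB. Since N lies in P_J and its diagonal
  blocks are the N_(n_k), the matrix L^-1 N L is upper Hessenberg iff each L_k^-1 N_(n_k) L_k
  is. So gB |-> (L_k B)_k is a bijection from X_J onto the product of the Pet_(n_k); it and
  its inverse are induced by polynomial maps of representatives (taking diagonal blocks,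
  assembling a block diagonal matrix), hence it is an isomorphism of varieties.
\<close>

section \<open>Matrices and the groups GL, B and P_J\<close>

lemma mmult_in_mats [simp]: "mmult m A B \<in> mats m"
  by (auto simp: mmult_def mats_def)

lemma idm_in_mats [simp]: "idm m \<in> mats m"
  by (auto simp: idm_def mats_def)

lemma mmult_assoc: "mmult m (mmult m A B) C = mmult m A (mmult m B C)"
proof -
  have "(\<Sum>l<m. (\<Sum>l'<m. A i l' * B l' l) * C l j) = (\<Sum>l'<m. A i l' * (\<Sum>l<m. B l' l * C l j))"
    for i j
  proof -
    have "(\<Sum>l<m. (\<Sum>l'<m. A i l' * B l' l) * C l j) = (\<Sum>l<m. \<Sum>l'<m. A i l' * (B l' l * C l j))"
      by (simp add: sum_distrib_right mult.assoc)
    also have "\<dots> = (\<Sum>l'<m. \<Sum>l<m. A i l' * (B l' l * C l j))"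
      by (rule sum.swap)
    also have "\<dots> = (\<Sum>l'<m. A i l' * (\<Sum>l<m. B l' l * C l j))"
      by (simp add: sum_distrib_left)
    finally show ?thesis .
  qed
  then show ?thesis
    by (auto simp: mmult_def fun_eq_iff)
qed

lemma mmult_idm_left: "A \<in> mats m \<Longrightarrow> mmult m (idm m) A = A"
  by (auto simp: mmult_def idm_def fun_eq_iff mats_def if_distrib[of "\<lambda>x. x * _"]
      cong: if_cong)

lemma mmult_idm_right: "A \<in> mats m \<Longrightarrow> mmult m A (idm m) = A"
  by (auto simp: mmult_def idm_def fun_eq_iff mats_def if_distrib[of "\<lambda>x. _ * x"]
      cong: if_cong)

lemma mmult_eq_idm_entry:
  "mmult m A B = idm m \<Longrightarrow> i < m \<Longrightarrow> j < m \<Longrightarrow> (\<Sum>l<m. A i l * B l j) = (if i = j then 1 else 0)"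
  by (drule fun_cong[of _ _ i], drule fun_cong[of _ _ j]) (simp add: mmult_def idm_def)

lemma sum_mmult_vector:
  fixes M N :: "nat \<Rightarrow> nat \<Rightarrow> complex"
  shows "(\<Sum>l<m. M i l * (\<Sum>l'<p. N l l' * v l')) = (\<Sum>l'<p. (\<Sum>l<m. M i l * N l l') * v l')"
proof -
  have "(\<Sum>l<m. M i l * (\<Sum>l'<p. N l l' * v l')) = (\<Sum>l<m. \<Sum>l'<p. M i l * N l l' * v l')"
    by (simp add: sum_distrib_left mult.assoc)
  also have "\<dots> = (\<Sum>l'<p. \<Sum>l<m. M i l * N l l' * v l')"
    by (rule sum.swap)
  also have "\<dots> = (\<Sum>l'<p. (\<Sum>l<m. M i l * N l l') * v l')"
    by (simp add: sum_distrib_right)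
  finally show ?thesis .
qed

definition to_mat :: "nat \<Rightarrow> (nat \<Rightarrow> nat \<Rightarrow> complex) \<Rightarrow> complex mat" where
  "to_mat m A = mat m m (\<lambda>(i, j). A i j)"

lemma to_mat_carrier: "to_mat m A \<in> carrier_mat m m"
  by (simp add: to_mat_def)

lemma to_mat_mmult: "to_mat m (mmult m A B) = to_mat m A * to_mat m B"
proof (rule eq_matI)
  fix i j
  assume "i < dim_row (to_mat m A * to_mat m B)" "j < dim_col (to_mat m A * to_mat m B)"
  then have i: "i < m" and j: "j < m"
    by (auto simp: to_mat_def)
  have "(to_mat m A * to_mat m B) $$ (i, j) = (\<Sum>l\<in>{0..<m}. A i l * B l j)"
    using i j by (simp add: to_mat_def scalar_prod_def)
  then show "to_mat m (mmult m A B) $$ (i, j) = (to_mat m A * to_mat m B) $$ (i, j)"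
    using i j by (simp add: to_mat_def mmult_def atLeast0LessThan)
qed (auto simp: to_mat_def)

lemma to_mat_idm: "to_mat m (idm m) = 1\<^sub>m m"
  by (rule eq_matI) (auto simp: to_mat_def idm_def)

lemma to_mat_inject:
  assumes "A \<in> mats m" "B \<in> mats m" "to_mat m A = to_mat m B"
  shows "A = B"
proof (intro ext)
  fix i j
  show "A i j = B i j"
  proof (cases "i < m \<and> j < m")
    case True
    then show ?thesis
      using arg_cong[OF assms(3), of "\<lambda>M. M $$ (i, j)"] by (simp add: to_mat_def)
  qed (use assms in \<open>auto simp: mats_def\<close>)
qed

lemma mmult_inverse_commute:
  assumes "A \<in> mats m" "B \<in> mats m" "mmult m A B = idm m"
  shows "mmult m B A = idm m"
proof -
  have "to_mat m A * to_mat m B = 1\<^sub>m m"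
    using assms by (metis to_mat_mmult to_mat_idm)
  then have "to_mat m B * to_mat m A = 1\<^sub>m m"
    by (rule mat_mult_left_right_inverse[OF to_mat_carrier to_mat_carrier])
  then have "to_mat m (mmult m B A) = to_mat m (idm m)"
    by (simp add: to_mat_mmult to_mat_idm)
  then show ?thesis
    by (rule to_mat_inject[OF mmult_in_mats idm_in_mats])
qed

lemma GL_in_mats: "g \<in> GL m \<Longrightarrow> g \<in> mats m"
  by (simp add: GL_def)

lemma GL_inverse: "g \<in> GL m \<Longrightarrow> \<exists>h \<in> GL m. mmult m g h = idm m \<and> mmult m h g = idm m"
  by (auto simp: GL_def intro: mmult_inverse_commute)

lemma idm_GL [simp]: "idm m \<in> GL m"
  by (auto simp: GL_def mmult_idm_left intro!: bexI[of _ "idm m"])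

lemma GL_mmult: "g \<in> GL m \<Longrightarrow> h \<in> GL m \<Longrightarrow> mmult m g h \<in> GL m"
proof -
  assume "g \<in> GL m" "h \<in> GL m"
  then obtain g' h' where g': "g' \<in> mats m" "mmult m g g' = idm m"
    and h': "h' \<in> mats m" "mmult m h h' = idm m"
    by (auto simp: GL_def)
  have "mmult m (mmult m g h) (mmult m h' g') = mmult m g (mmult m (mmult m h h') g')"
    by (simp add: mmult_assoc)
  also have "\<dots> = idm m"
    using g' h' by (simp add: mmult_idm_left)
  finally show ?thesis
    by (auto simp: GL_def intro!: bexI[of _ "mmult m h' g'"])
qed

text \<open>The invertible elements of parabolic m J form the standard parabolic subgroup P_J.\<close>

definition parabolic :: "nat \<Rightarrow> nat set \<Rightarrow> (nat \<Rightarrow> nat \<Rightarrow> complex) set" where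
  "parabolic m J = {g \<in> mats m. \<forall>s i j. s \<notin> J \<longrightarrow> j < s \<longrightarrow> s \<le> i \<longrightarrow> g i j = 0}"

lemma parabolic_zero: "g \<in> parabolic m J \<Longrightarrow> s \<notin> J \<Longrightarrow> j < s \<Longrightarrow> s \<le> i \<Longrightarrow> g i j = 0"
  by (auto simp: parabolic_def)

lemma idm_parabolic [simp]: "idm m \<in> parabolic m J"
  by (auto simp: parabolic_def idm_def mats_def)

lemma upper_triangular_parabolic:
  "g \<in> mats m \<Longrightarrow> (\<And>i j. j < i \<Longrightarrow> g i j = 0) \<Longrightarrow> g \<in> parabolic m J"
  by (auto simp: parabolic_def)

lemma parabolic_mmult: "A \<in> parabolic m J \<Longrightarrow> B \<in> parabolic m J \<Longrightarrow> mmult m A B \<in> parabolic m J"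
proof -
  assume A: "A \<in> parabolic m J" and B: "B \<in> parabolic m J"
  have "(\<Sum>l<m. A i l * B l j) = 0" if "s \<notin> J" "j < s" "s \<le> i" for s i j
  proof (rule sum.neutral, rule ballI)
    fix l
    show "A i l * B l j = 0"
      using parabolic_zero[OF A that(1) _ that(3), of l] parabolic_zero[OF B that(1,2), of l]
      by (cases "l < s") auto
  qed
  then show ?thesis
    using A by (auto simp: parabolic_def mmult_def mats_def)
qed

definition lower_corner :: "nat \<Rightarrow> nat \<Rightarrow> (nat \<Rightarrow> nat \<Rightarrow> complex) \<Rightarrow> (nat \<Rightarrow> nat \<Rightarrow> complex)" where
  "lower_corner m s A = (\<lambda>i j. if i < m \<and> j < m then
     (if s \<le> i \<and> s \<le> j then A i j else if i = j then 1 else 0) else 0)"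

lemma lower_corner_in_mats: "lower_corner m s A \<in> mats m"
  by (auto simp: lower_corner_def mats_def)

lemma lower_corner_mmult_entry:
  assumes "i < m" "j < m"
  shows "mmult m (lower_corner m s A) (lower_corner m s B) i j =
    (if s \<le> i \<and> s \<le> j then (\<Sum>l<m. if s \<le> l then A i l * B l j else 0) else idm m i j)"
proof -
  have "lower_corner m s A i l * lower_corner m s B l j =
      (if s \<le> i \<and> s \<le> j then (if s \<le> l then A i l * B l j else 0)
       else if l = i then (if i = j then 1 else 0) else 0)" if "l < m" for l
    using assms that by (auto simp: lower_corner_def)
  then have "(\<Sum>l<m. lower_corner m s A i l * lower_corner m s B l j) =
      (\<Sum>l<m. if s \<le> i \<and> s \<le> j then (if s \<le> l then A i l * B l j else 0)
               else if l = i then (if i = j then 1 else 0) else 0)"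
    by (intro sum.cong) simp_all
  then have "mmult m (lower_corner m s A) (lower_corner m s B) i j =
      (\<Sum>l<m. if s \<le> i \<and> s \<le> j then (if s \<le> l then A i l * B l j else 0)
               else if l = i then (if i = j then 1 else 0) else 0)"
    using assms by (simp add: mmult_def)
  also have "\<dots> = (if s \<le> i \<and> s \<le> j then (\<Sum>l<m. if s \<le> l then A i l * B l j else 0)
      else idm m i j)"
  proof (cases "s \<le> i \<and> s \<le> j")
    case False
    then show ?thesis
      using assms by (simp add: idm_def if_not_P[OF False])
  qed simp
  finally show ?thesis .
qed

lemma sum_lower_block:
  fixes A B :: "nat \<Rightarrow> nat \<Rightarrow> complex"
  assumes "\<And>l. l < s \<Longrightarrow> A i l = 0"
  shows "(\<Sum>l<m. if s \<le> l then A i l * B l j else 0) = (\<Sum>l<m. A i l * B l j)"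
  using assms by (intro sum.cong) (auto simp: not_le)

text \<open>As A is block upper triangular at s, the lower right corners of A and B are mutually
  inverse.\<close>

lemma lower_corner_left_inverse:
  assumes A_zero: "\<And>i l. l < s \<Longrightarrow> s \<le> i \<Longrightarrow> A i l = 0" and AB: "mmult m A B = idm m"
    and ij: "s \<le> i" "s \<le> j" "i < m" "j < m"
  shows "(\<Sum>l<m. if s \<le> l then B i l * A l j else 0) = (if i = j then 1 else 0)"
proof -
  have "mmult m (lower_corner m s A) (lower_corner m s B) = idm m"
  proof (intro ext)
    fix i' j'
    show "mmult m (lower_corner m s A) (lower_corner m s B) i' j' = idm m i' j'"
    proof (cases "i' < m \<and> j' < m")
      case True
      then show ?thesis
        using lower_corner_mmult_entry[of i' m j' s A B] sum_lower_block[where A=A and B=B and s=s and i=i' and m=m and j=j']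
          A_zero mmult_eq_idm_entry[OF AB, of i' j']
        by (auto simp: idm_def)
    qed (auto simp: mmult_def idm_def)
  qed
  then have BA: "mmult m (lower_corner m s B) (lower_corner m s A) = idm m"
    by (rule mmult_inverse_commute[OF lower_corner_in_mats lower_corner_in_mats])
  show ?thesis
    using ij fun_cong[OF fun_cong[OF BA, of i], of j]
    by (simp add: lower_corner_mmult_entry idm_def)
qed

lemma right_inverse_lower_left_zero:
  assumes A_zero: "\<And>i l. l < s \<Longrightarrow> s \<le> i \<Longrightarrow> A i l = 0" and AB: "mmult m A B = idm m"
    and B: "B \<in> mats m" and ij: "j < s" "s \<le> i"
  shows "B i j = 0"
proof (cases "i < m")
  case False
  then show ?thesis
    using B by (auto simp: mats_def)
next
  case True
  have AB_col: "(\<Sum>l<m. if s \<le> l then A l' l * B l j else 0) = 0" if "s \<le> l'" "l' < m" for l'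
    using that ij True A_zero sum_lower_block[where A=A and B=B and s=s and i=l' and m=m and j=j] by (simp add: mmult_eq_idm_entry[OF AB])
  have "B i j = (\<Sum>l<m. if l = i then B i j else 0)"
    using True by simp
  also have "\<dots> = (\<Sum>l<m. if s \<le> l then (if i = l then 1 else 0) * B l j else 0)"
    using ij by (intro sum.cong) auto
  also have "\<dots> = (\<Sum>l<m. if s \<le> l then (\<Sum>l'<m. if s \<le> l' then B i l' * A l' l else 0) * B l j else 0)"
    using lower_corner_left_inverse[OF A_zero AB] True ij by (intro sum.cong) auto
  also have "\<dots> = (\<Sum>l<m. \<Sum>l'<m. if s \<le> l' then B i l' * (if s \<le> l then A l' l * B l j else 0) else 0)"
  proof (intro sum.cong refl)
    fix l
    show "(if s \<le> l then (\<Sum>l'<m. if s \<le> l' then B i l' * A l' l else 0) * B l j else 0) =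
        (\<Sum>l'<m. if s \<le> l' then B i l' * (if s \<le> l then A l' l * B l j else 0) else 0)"
      by (cases "s \<le> l") (simp_all add: sum_distrib_right if_distrib[of "\<lambda>x. x * _"] mult.assoc cong: if_cong)
  qed
  also have "\<dots> = (\<Sum>l'<m. \<Sum>l<m. if s \<le> l' then B i l' * (if s \<le> l then A l' l * B l j else 0) else 0)"
    by (rule sum.swap)
  also have "\<dots> = (\<Sum>l'<m. if s \<le> l' then B i l' * (\<Sum>l<m. if s \<le> l then A l' l * B l j else 0) else 0)"
  proof (intro sum.cong refl)
    fix l'
    show "(\<Sum>l<m. if s \<le> l' then B i l' * (if s \<le> l then A l' l * B l j else 0) else 0) =
        (if s \<le> l' then B i l' * (\<Sum>l<m. if s \<le> l then A l' l * B l j else 0) else 0)"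
      by (cases "s \<le> l'") (simp_all add: sum_distrib_left)
  qed
  also have "\<dots> = 0"
    using AB_col by (auto intro!: sum.neutral)
  finally show ?thesis .
qed

lemma parabolic_inverse:
  assumes A: "A \<in> parabolic m J" and B: "B \<in> mats m" and AB: "mmult m A B = idm m"
  shows "B \<in> parabolic m J"
proof -
  have "B i j = 0" if "s \<notin> J" "j < s" "s \<le> i" for s i j
    using right_inverse_lower_left_zero[OF parabolic_zero[OF A that(1)] AB B that(2,3)] .
  then show ?thesis
    using B by (auto simp: parabolic_def)
qed

lemma Bor_eq_parabolic: "Bor m = parabolic m {} \<inter> GL m"
proof -
  have "(\<forall>i j. j < i \<longrightarrow> g i j = 0) \<longleftrightarrow> (\<forall>s i j. j < s \<longrightarrow> s \<le> i \<longrightarrow> g i j = 0)"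
    for g :: "nat \<Rightarrow> nat \<Rightarrow> complex"
    by (metis less_le_trans order_refl)
  then show ?thesis
    by (auto simp: Bor_def parabolic_def GL_def)
qed

lemma Bor_GL: "b \<in> Bor m \<Longrightarrow> b \<in> GL m"
  by (simp add: Bor_def)

lemma Bor_parabolic: "b \<in> Bor m \<Longrightarrow> b \<in> parabolic m J"
  by (auto simp: Bor_def GL_def intro: upper_triangular_parabolic)

lemma Bor_mmult: "b \<in> Bor m \<Longrightarrow> c \<in> Bor m \<Longrightarrow> mmult m b c \<in> Bor m"
  by (simp add: Bor_eq_parabolic parabolic_mmult GL_mmult)

lemma Bor_inverse: "b \<in> Bor m \<Longrightarrow> \<exists>c \<in> Bor m. mmult m b c = idm m \<and> mmult m c b = idm m"
proof -
  assume b: "b \<in> Bor m"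
  obtain c where c: "c \<in> GL m" "mmult m b c = idm m" "mmult m c b = idm m"
    using GL_inverse[OF Bor_GL[OF b]] by blast
  have "c \<in> parabolic m {}"
    using parabolic_inverse[of b m "{}" c] b c by (auto simp: Bor_eq_parabolic GL_def)
  then show ?thesis
    using c by (auto simp: Bor_eq_parabolic)
qed

lemma idm_Bor [simp]: "idm m \<in> Bor m"
  by (simp add: Bor_eq_parabolic)

lemma flag_of_self: "g \<in> mats m \<Longrightarrow> g \<in> flag_of m g"
  unfolding flag_of_def by (rule CollectI, rule exI[of _ "idm m"]) (simp add: mmult_idm_right)

lemma flag_of_iff: "g' \<in> flag_of m g \<longleftrightarrow> (\<exists>b \<in> Bor m. g' = mmult m g b)"
  by (auto simp: flag_of_def)

lemma flag_of_eq:
  assumes "g' \<in> flag_of m g"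
  shows "flag_of m g' = flag_of m g"
proof -
  obtain b where b: "b \<in> Bor m" "g' = mmult m g b"
    using assms by (auto simp: flag_of_iff)
  obtain c where c: "c \<in> Bor m" "mmult m b c = idm m"
    using Bor_inverse[OF b(1)] by blast
  have "flag_of m g \<subseteq> flag_of m g'"
  proof
    fix x
    assume "x \<in> flag_of m g"
    then obtain d where d: "d \<in> Bor m" "x = mmult m g d"
      by (auto simp: flag_of_iff)
    have "mmult m g' (mmult m c d) = mmult m g (mmult m (mmult m b c) d)"
      using b(2) by (simp add: mmult_assoc)
    also have "\<dots> = x"
      using c(2) d GL_in_mats[OF Bor_GL[OF d(1)]] by (simp add: mmult_idm_left)
    finally show "x \<in> flag_of m g'"
      using Bor_mmult[OF c(1) d(1)] unfolding flag_of_iff by blast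
  qed
  moreover have "flag_of m g' \<subseteq> flag_of m g"
  proof
    fix x
    assume "x \<in> flag_of m g'"
    then obtain d where d: "d \<in> Bor m" "x = mmult m g' d"
      by (auto simp: flag_of_iff)
    then have "x = mmult m g (mmult m b d)"
      using b(2) by (simp add: mmult_assoc)
    then show "x \<in> flag_of m g"
      using Bor_mmult[OF b(1) d(1)] unfolding flag_of_iff by blast
  qed
  ultimately show ?thesis
    by blast
qed

lemma flag_of_parabolic: "g \<in> parabolic m J \<Longrightarrow> g' \<in> flag_of m g \<Longrightarrow> g' \<in> parabolic m J"
  unfolding flag_of_iff using parabolic_mmult Bor_parabolic by blast

section \<open>The longest element of W_J\<close>

text \<open>Indices are 0-based and s_i swaps i - 1 and i, so x < y lie in one block of J iff
  x + 1, ..., y all belong to J.\<close>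

definition same_block :: "nat set \<Rightarrow> nat \<Rightarrow> nat \<Rightarrow> bool" where
  "same_block J x y \<longleftrightarrow> (\<forall>i. min x y < i \<and> i \<le> max x y \<longrightarrow> i \<in> J)"

lemma same_block_refl [simp]: "same_block J x x"
  by (auto simp: same_block_def)

lemma same_block_sym: "same_block J x y \<Longrightarrow> same_block J y x"
  by (simp add: same_block_def min.commute max.commute)

lemma same_block_trans: "same_block J x y \<Longrightarrow> same_block J y z \<Longrightarrow> same_block J x z"
  unfolding same_block_def
proof (intro allI impI)
  fix i
  assume xy: "\<forall>i. min x y < i \<and> i \<le> max x y \<longrightarrow> i \<in> J"
    and yz: "\<forall>i. min y z < i \<and> i \<le> max y z \<longrightarrow> i \<in> J"
    and i: "min x z < i \<and> i \<le> max x z"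
  then have "min x y < i \<and> i \<le> max x y \<or> min y z < i \<and> i \<le> max y z"
    by (auto simp: min_def max_def split: if_splits)
  then show "i \<in> J"
    using xy yz by blast
qed

lemma same_block_between:
  "x \<le> y \<Longrightarrow> y \<le> z \<Longrightarrow> same_block J x z \<Longrightarrow> same_block J x y \<and> same_block J y z"
  unfolding same_block_def by auto

lemma not_same_block_gap: "j < i \<Longrightarrow> \<not> same_block J j i \<Longrightarrow> \<exists>s. s \<notin> J \<and> j < s \<and> s \<le> i"
  unfolding same_block_def by auto

lemma same_block_gap: "same_block J x y \<Longrightarrow> s \<notin> J \<Longrightarrow> x < s \<Longrightarrow> y < s"
  unfolding same_block_def by (cases "y < s") (auto simp: min_def max_def)

lemma sref_involution: "1 \<le> i \<Longrightarrow> sref i (sref i x) = x"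
  by (auto simp: sref_def)

lemma sref_same_block: "i \<in> J \<Longrightarrow> 1 \<le> i \<Longrightarrow> same_block J (sref i x) x"
proof -
  assume i: "i \<in> J" "1 \<le> i"
  have "l \<in> J" if "min (sref i x) x < l" "l \<le> max (sref i x) x" for l
  proof -
    have "l = i"
      using that i(2) by (auto simp: sref_def split: if_splits)
    then show ?thesis
      using i(1) by simp
  qed
  then show ?thesis
    unfolding same_block_def by blast
qed

lemma sref_inj: "1 \<le> i \<Longrightarrow> inj (sref i)"
  by (rule inj_on_inverseI[of _ "sref i"]) (use sref_involution in blast)

definition inversions :: "nat \<Rightarrow> (nat \<Rightarrow> nat) \<Rightarrow> (nat \<times> nat) set" where
  "inversions n w = {(p, q). p < q \<and> q < n \<and> w q < w p}"

lemma perm_length_eq_card_inversions: "perm_length n w = card (inversions n w)"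
  by (simp add: perm_length_def inversions_def)

lemma inversions_subset: "inversions n w \<subseteq> {..<n} \<times> {..<n}"
  by (auto simp: inversions_def)

lemma perm_length_le: "perm_length n w \<le> n * n"
  using card_mono[OF _ inversions_subset, of n w]
  by (simp add: perm_length_eq_card_inversions card_cartesian_product)

lemma inversions_mult_sref:
  assumes i: "1 \<le> i" "i < n" and ascent: "w (i - 1) < w i"
  shows "map_prod (sref i) (sref i) ` inversions n w \<subseteq> inversions n (w \<circ> sref i) - {(i - 1, i)}"
proof
  fix x
  assume "x \<in> map_prod (sref i) (sref i) ` inversions n w"
  then obtain p q where pq: "p < q" "q < n" "w q < w p" "x = (sref i p, sref i q)"
    by (auto simp: inversions_def)
  have "\<not> (p = i - 1 \<and> q = i)"
    using pq ascent by auto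
  then have "sref i p < sref i q"
    using pq i by (auto simp: sref_def)
  moreover have "sref i q < n"
    using pq i by (auto simp: sref_def)
  moreover have "(sref i p, sref i q) \<noteq> (i - 1, i)"
    using pq(1) i by (auto simp: sref_def split: if_splits)
  ultimately show "x \<in> inversions n (w \<circ> sref i) - {(i - 1, i)}"
    using pq sref_involution[OF i(1)] by (auto simp: inversions_def)
qed

lemma perm_length_mult_sref:
  assumes "1 \<le> i" "i < n" "w (i - 1) < w i"
  shows "perm_length n w < perm_length n (w \<circ> sref i)"
proof -
  let ?f = "map_prod (sref i) (sref i)"
  have "sref i (i - 1) = i" "sref i i = i - 1"
    using assms(1) by (simp_all add: sref_def)
  then have new: "(i - 1, i) \<in> inversions n (w \<circ> sref i)"
    using assms by (simp add: inversions_def)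
  have fin: "finite (inversions n (w \<circ> sref i))"
    using finite_subset[OF inversions_subset] by simp
  have "card (?f ` inversions n w) \<le> card (inversions n (w \<circ> sref i) - {(i - 1, i)})"
    using fin inversions_mult_sref[OF assms] by (intro card_mono) simp_all
  also have "\<dots> < card (inversions n (w \<circ> sref i))"
    using card_Diff1_less[OF fin new] .
  finally have "card (?f ` inversions n w) < card (inversions n (w \<circ> sref i))" .
  moreover have "inj_on ?f (inversions n w)"
    by (rule inj_on_subset[OF map_prod_inj_on[OF sref_inj[OF assms(1)] sref_inj[OF assms(1)]]]) simp
  ultimately show ?thesis
    by (simp add: perm_length_eq_card_inversions card_image)
qed

locale simple_subset =
  fixes n :: nat and J :: "nat set"
  assumes J_subset: "J \<subseteq> {1..n - 1}"
begin

lemma J_pos: "i \<in> J \<Longrightarrow> 1 \<le> i"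
  using J_subset by auto

lemma J_less: "i \<in> J \<Longrightarrow> i < n"
  using J_subset by fastforce

lemma WJ_same_block_inj: "w \<in> WJ J \<Longrightarrow> (\<forall>x. same_block J (w x) x) \<and> inj w"
proof (induction rule: WJ.induct)
  case WJ_id
  then show ?case by simp
next
  case (WJ_step w i)
  have i: "1 \<le> i"
    using J_pos WJ_step by simp
  have "same_block J (w (sref i x)) x" for x
    using WJ_step sref_same_block[OF WJ_step(2) i] same_block_trans by blast
  moreover have "inj (sref i)"
    using sref_inj[OF i] .
  ultimately show ?case
    using WJ_step inj_compose[of w "sref i"] by (simp add: comp_def)
qed

lemma same_block_below: "same_block J y x \<Longrightarrow> x < n \<Longrightarrow> y < n"
proof (rule ccontr)
  assume "same_block J y x" "x < n" "\<not> y < n"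
  then have "y \<in> J"
    unfolding same_block_def by (auto simp: min_def max_def)
  then show False
    using J_less \<open>\<not> y < n\<close> by blast
qed

definition is_longest :: "(nat \<Rightarrow> nat) \<Rightarrow> bool" where
  "is_longest w \<longleftrightarrow> w \<in> WJ J \<and> (\<forall>v \<in> WJ J. perm_length n v \<le> perm_length n w)"

lemma is_longest_exists: "\<exists>w. is_longest w"
proof -
  have "\<exists>x. x \<in> WJ J \<and> (\<forall>y. y \<in> WJ J \<longrightarrow> perm_length n y \<le> perm_length n x)"
    by (rule ex_has_greatest_nat[where k=id and b="n * n + 1"])
      (auto intro: WJ.WJ_id simp: le_imp_less_Suc perm_length_le)
  then show ?thesis
    by (auto simp: is_longest_def)
qed

text \<open>Otherwise multiplying by s_(y+1) would produce a longer element of W_J.\<close>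

lemma is_longest_descent_Suc:
  assumes "is_longest w" "Suc y \<in> J"
  shows "w (Suc y) < w y"
proof -
  have w: "w \<in> WJ J" and max: "\<forall>v \<in> WJ J. perm_length n v \<le> perm_length n w"
    using assms(1) by (auto simp: is_longest_def)
  have "\<not> w y < w (Suc y)"
  proof
    assume "w y < w (Suc y)"
    then have "perm_length n w < perm_length n (w \<circ> sref (Suc y))"
      using perm_length_mult_sref[of "Suc y" n w] J_less[OF assms(2)] by simp
    then show False
      using max WJ.WJ_step[OF w assms(2)] by (meson not_le)
  qed
  moreover have "w y \<noteq> w (Suc y)"
    using injD[of w y "Suc y"] WJ_same_block_inj[OF w] by auto
  ultimately show ?thesis
    by simp
qed

lemma is_longest_descent:
  assumes "is_longest w" "same_block J x y" "x < y"
  shows "w y < w x"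
  using assms(2,3)
proof (induction y rule: less_induct)
  case (less y)
  obtain y' where y': "y = Suc y'"
    using less(3) by (cases y) auto
  have "Suc y' \<in> J"
    using less(2,3) y' unfolding same_block_def by auto
  then have step: "w y < w y'"
    using is_longest_descent_Suc[OF assms(1)] y' by simp
  show ?case
  proof (cases "x = y'")
    case False
    then have "x < y'"
      using less(3) y' by simp
    then have "w y' < w x"
      using less(1)[of y'] same_block_between[of x y' y J] less(2) y' by simp
    then show ?thesis
      using step by simp
  qed (use step in simp)
qed

definition block_lo :: "nat \<Rightarrow> nat" where
  "block_lo x = (LEAST a. same_block J a x)"

definition block_hi :: "nat \<Rightarrow> nat" where
  "block_hi x = (GREATEST b. same_block J b x)"

lemma same_block_le_max: "same_block J b x \<Longrightarrow> b \<le> max x n"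
proof (rule ccontr)
  assume b: "same_block J b x" "\<not> b \<le> max x n"
  then have "min b x < b \<and> b \<le> max b x"
    by auto
  then have "b \<in> J"
    using b(1) unfolding same_block_def by blast
  then show False
    using J_less \<open>\<not> b \<le> max x n\<close> by fastforce
qed

lemma block_lo_same: "same_block J (block_lo x) x"
  unfolding block_lo_def by (rule LeastI[of _ x]) simp

lemma block_lo_le: "same_block J a x \<Longrightarrow> block_lo x \<le> a"
  unfolding block_lo_def by (rule Least_le)

lemma block_hi_same: "same_block J (block_hi x) x"
  unfolding block_hi_def by (rule GreatestI_nat[of _ x "max x n"]) (auto simp: same_block_le_max)

lemma block_hi_ge: "same_block J b x \<Longrightarrow> b \<le> block_hi x"
  unfolding block_hi_def by (rule Greatest_le_nat[of _ b "max x n"]) (auto simp: same_block_le_max)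

lemma same_block_iff_interval: "same_block J y x \<longleftrightarrow> block_lo x \<le> y \<and> y \<le> block_hi x"
proof
  assume "same_block J y x"
  then show "block_lo x \<le> y \<and> y \<le> block_hi x"
    using block_lo_le block_hi_ge by auto
next
  assume y: "block_lo x \<le> y \<and> y \<le> block_hi x"
  have "same_block J (block_lo x) (block_hi x)"
    using same_block_trans[OF block_lo_same same_block_sym[OF block_hi_same]] .
  then have "same_block J (block_lo x) y"
    using same_block_between y by blast
  then show "same_block J y x"
    using same_block_trans[OF same_block_sym block_lo_same] by blast
qed

lemma block_lo_eq: "same_block J y x \<Longrightarrow> block_lo y = block_lo x"
  by (meson same_block_iff_interval same_block_sym same_block_trans block_lo_same order_antisym
      block_lo_le)

lemma block_hi_eq: "same_block J y x \<Longrightarrow> block_hi y = block_hi x"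
  by (meson same_block_iff_interval same_block_sym same_block_trans block_hi_same order_antisym
      block_hi_ge)

definition block_reverse :: "nat \<Rightarrow> nat" where
  "block_reverse x = block_lo x + block_hi x - x"

lemma same_block_in_interval:
  assumes "block_lo x \<le> a" "a \<le> block_hi x" "block_lo x \<le> b" "b \<le> block_hi x"
  shows "same_block J a b"
proof -
  have "same_block J a x" "same_block J b x"
    using assms same_block_iff_interval by simp_all
  then show ?thesis
    using same_block_trans[OF _ same_block_sym] by blast
qed

lemma is_longest_same_block: "is_longest w \<Longrightarrow> same_block J (w z) z"
  using WJ_same_block_inj by (auto simp: is_longest_def)

lemma is_longest_le_block_hi:
  assumes "is_longest w" "block_lo x + t \<le> block_hi x"
  shows "w (block_lo x + t) \<le> block_hi x - t"
  using assms(2)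
proof (induction t)
  case 0
  show ?case
    using block_hi_ge same_block_trans[OF is_longest_same_block[OF assms(1)] block_lo_same] by simp
next
  case (Suc t)
  have "w (block_lo x + Suc t) < w (block_lo x + t)"
    using Suc.prems by (intro is_longest_descent[OF assms(1)] same_block_in_interval[of x]) auto
  then show ?case
    using Suc by linarith
qed

lemma is_longest_ge_block_lo:
  assumes "is_longest w" "block_lo x + t \<le> block_hi x"
  shows "block_lo x + t \<le> w (block_hi x - t)"
  using assms(2)
proof (induction t)
  case 0
  show ?case
    using block_lo_le same_block_trans[OF is_longest_same_block[OF assms(1)] block_hi_same] by simp
next
  case (Suc t)
  have "w (block_hi x - t) < w (block_hi x - Suc t)"
    using Suc.prems by (intro is_longest_descent[OF assms(1)] same_block_in_interval[of x]) auto
  then show ?case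
    using Suc by linarith
qed

text \<open>Being strictly decreasing on each block and mapping each block into itself, the longest
  element reverses every block.\<close>

lemma is_longest_eq_block_reverse:
  assumes "is_longest w"
  shows "w = block_reverse"
proof
  fix x
  let ?L = "block_lo x" and ?H = "block_hi x"
  have L: "?L \<le> x" and H: "x \<le> ?H"
    using block_lo_le[of x x] block_hi_ge[of x x] by simp_all
  have "w x \<le> ?H - (x - ?L)"
    using is_longest_le_block_hi[OF assms, of x "x - ?L"] L H by simp
  moreover have "?L + (?H - x) \<le> w x"
    using is_longest_ge_block_lo[OF assms, of x "?H - x"] L H by simp
  ultimately show "w x = block_reverse x"
    unfolding block_reverse_def using L H by linarith
qed

lemma longest_eq_block_reverse: "longest n J = block_reverse"
proof -
  obtain w where "is_longest w"
    using is_longest_exists by blast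
  then have longest: "is_longest block_reverse"
    using is_longest_eq_block_reverse by simp
  show ?thesis
    unfolding longest_def
  proof (rule the_equality)
    show "block_reverse \<in> WJ J \<and> (\<forall>v \<in> WJ J. perm_length n v \<le> perm_length n block_reverse)"
      using longest unfolding is_longest_def .
    show "w = block_reverse" if "w \<in> WJ J \<and> (\<forall>v \<in> WJ J. perm_length n v \<le> perm_length n w)" for w
      using is_longest_eq_block_reverse[of w] that unfolding is_longest_def by blast
  qed
qed

lemma block_reverse_same_block: "same_block J (block_reverse x) x"
  using block_lo_le[of x x] block_hi_ge[of x x]
  by (simp add: same_block_iff_interval block_reverse_def) (intro conjI; linarith)

lemma block_reverse_involution: "block_reverse (block_reverse x) = x"
  using block_lo_eq[OF block_reverse_same_block[of x]] block_hi_eq[OF block_reverse_same_block[of x]]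
    block_lo_le[of x x] block_hi_ge[of x x]
  by (simp add: block_reverse_def)

lemma block_reverse_less: "x < n \<Longrightarrow> block_reverse x < n"
  using same_block_below block_reverse_same_block by blast

lemma block_reverse_reverses: "same_block J x y \<Longrightarrow> x < y \<Longrightarrow> block_reverse y < block_reverse x"
  using block_lo_eq[of x y] block_hi_eq[of x y] block_hi_ge[of y y] by (simp add: block_reverse_def)

lemma block_reverse_preserves:
  assumes "\<not> same_block J x y" "x < y"
  shows "block_reverse x < block_reverse y"
proof -
  obtain s where s: "s \<notin> J" "x < s" "s \<le> y"
    using not_same_block_gap[OF assms(2,1)] by blast
  have "block_reverse x < s"
    using same_block_gap[OF same_block_sym[OF block_reverse_same_block] s(1,2)] .
  moreover have "s \<le> block_reverse y"
  proof (rule ccontr)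
    assume "\<not> s \<le> block_reverse y"
    then have "y < s"
      using same_block_gap[OF block_reverse_same_block s(1)] by simp
    then show False
      using s(3) by simp
  qed
  ultimately show ?thesis
    by simp
qed

end

section \<open>The Schubert variety of w_J is P_J/B\<close>

definition border :: "nat \<Rightarrow> (nat \<Rightarrow> nat \<Rightarrow> complex) \<Rightarrow> (nat \<Rightarrow> complex) \<Rightarrow> (nat \<Rightarrow> complex)
    \<Rightarrow> complex \<Rightarrow> (nat \<Rightarrow> nat \<Rightarrow> complex)" where
  "border m M c r d = (\<lambda>i j. if i < m \<and> j < m then M i j else if i < m \<and> j = m then c i
      else if i = m \<and> j < m then r j else if i = m \<and> j = m then d else 0)"

lemma border_in_mats: "border m M c r d \<in> mats (Suc m)"
  by (auto simp: border_def mats_def)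

lemma border_mmult:
  "mmult (Suc m) (border m M c r d) (border m M' c' r' d') =
   border m (\<lambda>i j. mmult m M M' i j + c i * r' j) (\<lambda>i. (\<Sum>l<m. M i l * c' l) + c i * d')
     (\<lambda>j. (\<Sum>l<m. r l * M' l j) + d * r' j) ((\<Sum>l<m. r l * c' l) + d * d')"
proof (intro ext)
  fix i j
  have "(\<Sum>l<m. border m M c r d i l * border m M' c' r' d' l j) =
    (\<Sum>l<m. (if i < m then M i l else if i = m then r l else 0) *
            (if j < m then M' l j else if j = m then c' l else 0))"
    by (rule sum.cong) (auto simp: border_def)
  then show "mmult (Suc m) (border m M c r d) (border m M' c' r' d') i j =
    border m (\<lambda>i j. mmult m M M' i j + c i * r' j) (\<lambda>i. (\<Sum>l<m. M i l * c' l) + c i * d')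
     (\<lambda>j. (\<Sum>l<m. r l * M' l j) + d * r' j) ((\<Sum>l<m. r l * c' l) + d * d') i j"
    by (auto simp: border_def mmult_def less_Suc_eq)
qed

lemma idm_border: "idm (Suc m) = border m (idm m) (\<lambda>_. 0) (\<lambda>_. 0) 1"
  by (auto simp: border_def idm_def fun_eq_iff)

lemma border_cong:
  assumes "\<And>i j. i < m \<Longrightarrow> j < m \<Longrightarrow> M i j = M' i j" "\<And>i. i < m \<Longrightarrow> c i = c' i"
    "\<And>j. j < m \<Longrightarrow> r j = r' j" "d = d'"
  shows "border m M c r d = border m M' c' r' d'"
  using assms by (auto simp: border_def fun_eq_iff)

lemma sum_delta_mult: "i < (m::nat) \<Longrightarrow> (\<Sum>l<m. (if i = l then 1 else 0) * v l) = (v i :: complex)"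
proof -
  assume i: "i < m"
  have "(\<Sum>l<m. (if i = l then 1 else 0) * v l) = (\<Sum>l<m. if l = i then v i else 0)"
    by (rule sum.cong) auto
  also have "\<dots> = v i"
    using i by simp
  finally show ?thesis .
qed

lemma border_Bor:
  assumes "U \<in> Bor m"
  shows "border m U c (\<lambda>_. 0) 1 \<in> Bor (Suc m)"
proof -
  obtain V where V: "V \<in> mats m" "mmult m U V = idm m"
    using assms by (auto simp: Bor_def GL_def)
  have "mmult (Suc m) (border m U c (\<lambda>_. 0) 1)
      (border m V (\<lambda>i. - (\<Sum>l<m. V i l * c l)) (\<lambda>_. 0) 1) = idm (Suc m)"
    unfolding border_mmult idm_border
  proof (rule border_cong)
    fix i
    assume i: "i < m"
    have "(\<Sum>l<m. U i l * (\<Sum>l'<m. V l l' * c l')) = (\<Sum>l'<m. (\<Sum>l<m. U i l * V l l') * c l')"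
      by (rule sum_mmult_vector)
    also have "\<dots> = (\<Sum>l'<m. (if i = l' then 1 else 0) * c l')"
      by (rule sum.cong) (simp_all add: mmult_eq_idm_entry[OF V(2) i])
    also have "\<dots> = c i"
      using i by (rule sum_delta_mult)
    finally show "(\<Sum>l<m. U i l * - (\<Sum>l'<m. V l l' * c l')) + c i * 1 = 0"
      by (simp add: sum_negf)
  qed (use V in simp_all)
  then have "border m U c (\<lambda>_. 0) 1 \<in> GL (Suc m)"
    by (auto simp: GL_def border_in_mats)
  then show ?thesis
    using assms by (auto simp: Bor_def border_def)
qed

lemma border_lower_GL:
  assumes "X \<in> GL m" "a \<noteq> 0"
  shows "border m X (\<lambda>_. 0) r a \<in> GL (Suc m)"
proof -
  obtain Y where Y: "Y \<in> mats m" "mmult m X Y = idm m"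
    using assms by (auto simp: GL_def)
  have "mmult (Suc m) (border m X (\<lambda>_. 0) r a)
      (border m Y (\<lambda>_. 0) (\<lambda>j. - (\<Sum>l<m. r l * Y l j) / a) (1 / a)) = idm (Suc m)"
    unfolding border_mmult idm_border by (rule border_cong) (use Y assms(2) in auto)
  then show ?thesis
    by (auto simp: GL_def border_in_mats)
qed

lemma border_unipotent_mmult_lower:
  assumes "a \<noteq> 0"
  shows "mmult (Suc m) (border m U (\<lambda>i. c i / a) (\<lambda>_. 0) 1) (border m X (\<lambda>_. 0) r a) =
    border m (\<lambda>i j. mmult m U X i j + c i * r j / a) c r a"
  unfolding border_mmult by (rule border_cong) (use assms in auto)

definition schur_complement :: "nat \<Rightarrow> (nat \<Rightarrow> nat \<Rightarrow> complex) \<Rightarrow> (nat \<Rightarrow> nat \<Rightarrow> complex)" where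
  "schur_complement m A = (\<lambda>i j. if i < m \<and> j < m then A i j - A i m * A m j / A m m else 0)"

lemma schur_complement_parabolic:
  assumes "A \<in> parabolic (Suc m) J"
  shows "schur_complement m A \<in> parabolic m J"
proof -
  have "schur_complement m A i j = 0" if "s \<notin> J" "j < s" "s \<le> i" for s i j
  proof (cases "i < m \<and> j < m")
    case True
    then have "A i j = 0" "A m j = 0"
      using parabolic_zero[OF assms that] parabolic_zero[OF assms that(1,2), of m] that by auto
    then show ?thesis
      by (simp add: schur_complement_def)
  qed (auto simp: schur_complement_def)
  then show ?thesis
    by (auto simp: parabolic_def mats_def schur_complement_def)
qed

lemma schur_complement_GL:
  assumes A: "A \<in> GL (Suc m)" and a: "A m m \<noteq> 0"
  shows "schur_complement m A \<in> GL m"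
proof -
  obtain H where H: "H \<in> mats (Suc m)" "mmult (Suc m) A H = idm (Suc m)"
    using A by (auto simp: GL_def)
  have AH: "(\<Sum>l<m. A i l * H l j) + A i m * H m j = (if i = j then 1 else 0)"
    if "i < Suc m" "j < Suc m" for i j
    using mmult_eq_idm_entry[OF H(2) that] by simp
  define H' where "H' = (\<lambda>i j. if i < m \<and> j < m then H i j else 0)"
  have "mmult m (schur_complement m A) H' i j = idm m i j" if "i < m" "j < m" for i j
  proof -
    have "mmult m (schur_complement m A) H' i j =
        (\<Sum>l<m. A i l * H l j) - (A i m / A m m) * (\<Sum>l<m. A m l * H l j)"
      using that by (simp add: mmult_def schur_complement_def H'_def algebra_simps sum_subtractf
          sum_distrib_left)
    also have "\<dots> = (\<Sum>l<m. A i l * H l j) + A i m * H m j"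
    proof -
      have "(\<Sum>l<m. A m l * H l j) = - (A m m * H m j)"
        using AH[of m j] that by (simp add: eq_neg_iff_add_eq_0)
      then show ?thesis
        using a by (simp add: field_simps)
    qed
    also have "\<dots> = idm m i j"
      using AH[of i j] that by (simp add: idm_def)
    finally show ?thesis .
  qed
  then have "mmult m (schur_complement m A) H' = idm m"
    by (auto simp: fun_eq_iff mmult_def idm_def)
  moreover have "H' \<in> mats m" "schur_complement m A \<in> mats m"
    by (auto simp: H'_def schur_complement_def mats_def)
  ultimately show ?thesis
    by (auto simp: GL_def)
qed

text \<open>Conjugation by w_J turns these matrices into upper triangular ones.\<close>

definition block_lower :: "nat set \<Rightarrow> (nat \<Rightarrow> nat \<Rightarrow> complex) \<Rightarrow> bool" where
  "block_lower J X \<longleftrightarrow> (\<forall>i j. i < j \<and> same_block J i j \<longrightarrow> X i j = 0)"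

definition Bor_block_lower_approx :: "nat \<Rightarrow> nat set \<Rightarrow> (nat \<Rightarrow> nat \<Rightarrow> complex) \<Rightarrow> bool" where
  "Bor_block_lower_approx m J A \<longleftrightarrow> (\<forall>e>0. \<exists>U \<in> Bor m. \<exists>X \<in> parabolic m J \<inter> GL m.
     block_lower J X \<and> (\<forall>i<m. \<forall>j<m. cmod (A i j - mmult m U X i j) < e))"

lemma Bor_block_lower_approx_closed:
  assumes "\<And>e. e > 0 \<Longrightarrow> \<exists>A'. Bor_block_lower_approx m J A' \<and> (\<forall>i<m. \<forall>j<m. cmod (A i j - A' i j) < e)"
  shows "Bor_block_lower_approx m J A"
  unfolding Bor_block_lower_approx_def
proof (intro allI impI)
  fix e :: real
  assume "e > 0"
  then obtain A' where A': "Bor_block_lower_approx m J A'" "\<forall>i<m. \<forall>j<m. cmod (A i j - A' i j) < e / 2"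
    using assms[of "e / 2"] by auto
  then obtain U X where UX: "U \<in> Bor m" "X \<in> parabolic m J \<inter> GL m" "block_lower J X"
    and close: "\<forall>i<m. \<forall>j<m. cmod (A' i j - mmult m U X i j) < e / 2"
    using \<open>e > 0\<close> unfolding Bor_block_lower_approx_def by (meson half_gt_zero)
  have "cmod (A i j - mmult m U X i j) < e" if "i < m" "j < m" for i j
  proof -
    have "cmod ((A i j - A' i j) + (A' i j - mmult m U X i j)) < e"
      by (rule norm_triangle_lt) (use A'(2) close that in fastforce)
    then show ?thesis
      by simp
  qed
  then show "\<exists>U \<in> Bor m. \<exists>X \<in> parabolic m J \<inter> GL m. block_lower J X \<and>
      (\<forall>i<m. \<forall>j<m. cmod (A i j - mmult m U X i j) < e)"
    using UX by blast
qed

lemma border_lower_parabolic: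
  assumes X: "X \<in> parabolic m J" and A: "A \<in> parabolic (Suc m) J"
  shows "border m X (\<lambda>_. 0) (\<lambda>j. A m j) a \<in> parabolic (Suc m) J"
proof -
  have "border m X (\<lambda>_. 0) (\<lambda>j. A m j) a i j = 0" if "s \<notin> J" "j < s" "s \<le> i" for s i j
    using parabolic_zero[OF X that] parabolic_zero[OF A that] that by (auto simp: border_def)
  then show ?thesis
    by (auto simp: parabolic_def border_in_mats)
qed

lemma border_block_lower: "block_lower J X \<Longrightarrow> block_lower J (border m X (\<lambda>_. 0) r a)"
  by (auto simp: block_lower_def border_def)

text \<open>If the corner entry a is nonzero, A = [[1, c/a], [0, 1]] [[S, 0], [r, a]] for the Schur
  complement S, and approximating S = U X gives an approximation of A.\<close>

lemma Bor_block_lower_approx_Suc: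
  assumes IH: "\<And>S. S \<in> parabolic m J \<inter> GL m \<Longrightarrow> Bor_block_lower_approx m J S"
    and A: "A \<in> parabolic (Suc m) J" "A \<in> GL (Suc m)" and a: "A m m \<noteq> 0"
  shows "Bor_block_lower_approx (Suc m) J A"
  unfolding Bor_block_lower_approx_def
proof (intro allI impI)
  fix e :: real
  assume e: "e > 0"
  let ?S = "schur_complement m A"
  obtain U' X' where U': "U' \<in> Bor m" and X': "X' \<in> parabolic m J" "X' \<in> GL m" "block_lower J X'"
    and close: "\<forall>i<m. \<forall>j<m. cmod (?S i j - mmult m U' X' i j) < e"
    using IH[of ?S] schur_complement_parabolic[OF A(1)] schur_complement_GL[OF A(2) a] e
    unfolding Bor_block_lower_approx_def by blast
  define U where "U = border m U' (\<lambda>i. A i m / A m m) (\<lambda>_. 0) 1"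
  define X where "X = border m X' (\<lambda>_. 0) (\<lambda>j. A m j) (A m m)"
  have "U \<in> Bor (Suc m)"
    unfolding U_def using U' by (rule border_Bor)
  moreover have "X \<in> GL (Suc m)"
    unfolding X_def using X'(2) a by (rule border_lower_GL)
  moreover have "X \<in> parabolic (Suc m) J" "block_lower J X"
    unfolding X_def using border_lower_parabolic[OF X'(1) A(1)] border_block_lower[OF X'(3)] .
  moreover have "cmod (A i j - mmult (Suc m) U X i j) < e" if "i < Suc m" "j < Suc m" for i j
  proof -
    have UX: "mmult (Suc m) U X = border m (\<lambda>i j. mmult m U' X' i j + A i m * A m j / A m m)
        (\<lambda>i. A i m) (\<lambda>j. A m j) (A m m)"
      unfolding U_def X_def using a by (rule border_unipotent_mmult_lower)
    show ?thesis
    proof (cases "i < m \<and> j < m")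
      case True
      then have "A i j - mmult (Suc m) U X i j = ?S i j - mmult m U' X' i j"
        by (simp add: UX border_def schur_complement_def algebra_simps)
      then show ?thesis
        using close True by simp
    next
      case False
      then have "A i j - mmult (Suc m) U X i j = 0"
        using that by (auto simp: UX border_def less_Suc_eq)
      then show ?thesis
        using e by simp
    qed
  qed
  ultimately show "\<exists>U \<in> Bor (Suc m). \<exists>X \<in> parabolic (Suc m) J \<inter> GL (Suc m). block_lower J X \<and>
      (\<forall>i<Suc m. \<forall>j<Suc m. cmod (A i j - mmult (Suc m) U X i j) < e)"
    by blast
qed

lemma GL_last_row_nonzero:
  assumes "A \<in> GL (Suc m)" "A m m = 0"
  shows "\<exists>j0<m. A m j0 \<noteq> 0"
proof (rule ccontr)
  obtain H where H: "mmult (Suc m) A H = idm (Suc m)"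
    using assms(1) by (auto simp: GL_def)
  assume "\<not> (\<exists>j0<m. A m j0 \<noteq> 0)"
  then have "(\<Sum>l<Suc m. A m l * H l m) = 0"
    using assms(2) by (auto intro!: sum.neutral simp: less_Suc_eq)
  then show False
    using mmult_eq_idm_entry[OF H, of m m] by simp
qed

lemma mmult_column_shear:
  assumes "j0 < m" "i < Suc m" "j < Suc m"
  shows "mmult (Suc m) A (border m (idm m) (\<lambda>i. if i = j0 then c else 0) (\<lambda>_. 0) 1) i j =
    A i j + (if j = m then c * A i j0 else 0)"
proof -
  let ?T = "border m (idm m) (\<lambda>i. if i = j0 then c else 0) (\<lambda>_. 0) 1"
  have "A i l * ?T l j = (if l = j then A i l else 0) +
      (if l = j0 then (if j = m then c * A i l else 0) else 0)" if "l < Suc m" for l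
    using that assms by (auto simp: border_def idm_def less_Suc_eq)
  then have "mmult (Suc m) A ?T i j = (\<Sum>l<Suc m. (if l = j then A i l else 0) +
      (if l = j0 then (if j = m then c * A i l else 0) else 0))"
    unfolding mmult_def using assms by (auto intro!: sum.cong)
  also have "\<dots> = A i j + (if j = m then c * A i j0 else 0)"
    using assms by (simp add: sum.distrib)
  finally show ?thesis .
qed

text \<open>A vanishing corner entry is made nonzero by adding a small multiple of a column j0 with
  A m j0 \<noteq> 0 to the last column, i.e. by a right multiplication in B.\<close>

lemma nonzero_corner_nearby:
  assumes A: "A \<in> parabolic (Suc m) J" "A \<in> GL (Suc m)" and e: "e > 0"
  shows "\<exists>A' \<in> parabolic (Suc m) J \<inter> GL (Suc m). A' m m \<noteq> 0 \<and>
    (\<forall>i<Suc m. \<forall>j<Suc m. cmod (A i j - A' i j) < e)"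
proof (cases "A m m = 0")
  case False
  then show ?thesis
    using A e by auto
next
  case True
  obtain j0 where j0: "j0 < m" "A m j0 \<noteq> 0"
    using GL_last_row_nonzero[OF A(2) True] by blast
  define M where "M = (\<Sum>i<Suc m. cmod (A i j0))"
  define d where "d = e / (M + 1)"
  have M: "cmod (A i j0) \<le> M" if "i < Suc m" for i
    unfolding M_def using that by (intro member_le_sum) auto
  have d: "d > 0" "d * M < e"
    using e sum_nonneg[of "{..<Suc m}" "\<lambda>i. cmod (A i j0)"]
    by (auto simp: d_def M_def field_simps)
  define T where "T = border m (idm m) (\<lambda>i. if i = j0 then complex_of_real d else 0) (\<lambda>_. 0) 1"
  define A' where "A' = mmult (Suc m) A T"
  have A'_entry: "A' i j = A i j + (if j = m then d * A i j0 else 0)"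
    if "i < Suc m" "j < Suc m" for i j
    unfolding A'_def T_def using j0(1) that by (rule mmult_column_shear)
  have "T \<in> Bor (Suc m)"
    unfolding T_def by (rule border_Bor) simp
  then have "A' \<in> parabolic (Suc m) J \<inter> GL (Suc m)"
    using A by (simp add: A'_def parabolic_mmult Bor_parabolic GL_mmult Bor_GL)
  moreover have "A' m m \<noteq> 0"
    using A'_entry[of m m] True j0 d by simp
  moreover have "cmod (A i j - A' i j) < e" if "i < Suc m" "j < Suc m" for i j
  proof -
    have "d * cmod (A i j0) \<le> d * M"
      using M[OF that(1)] d(1) by (simp add: mult_left_mono)
    then have "d * cmod (A i j0) < e"
      using d(2) by linarith
    then show ?thesis
      using A'_entry[OF that] d(1) e by (auto simp: norm_mult)
  qed
  ultimately show ?thesis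
    by blast
qed

lemma parabolic_Bor_block_lower_approx:
  "A \<in> parabolic m J \<inter> GL m \<Longrightarrow> Bor_block_lower_approx m J A"
proof (induction m arbitrary: A)
  case 0
  have "block_lower J (idm 0)"
    by (simp add: block_lower_def idm_def)
  then show ?case
    unfolding Bor_block_lower_approx_def using idm_Bor idm_parabolic idm_GL by blast
next
  case (Suc m)
  show ?case
  proof (rule Bor_block_lower_approx_closed)
    fix e :: real
    assume "e > 0"
    then obtain A' where "A' \<in> parabolic (Suc m) J \<inter> GL (Suc m)" "A' m m \<noteq> 0"
      "\<forall>i<Suc m. \<forall>j<Suc m. cmod (A i j - A' i j) < e"
      using nonzero_corner_nearby[of A m J e] Suc.prems by blast
    then show "\<exists>A'. Bor_block_lower_approx (Suc m) J A' \<and>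
        (\<forall>i<Suc m. \<forall>j<Suc m. cmod (A i j - A' i j) < e)"
      using Bor_block_lower_approx_Suc[OF Suc.IH] by blast
  qed
qed

context simple_subset
begin

abbreviation w0 :: "nat \<Rightarrow> nat \<Rightarrow> complex" where
  "w0 \<equiv> pmat n block_reverse"

lemma w0_in_mats: "w0 \<in> mats n"
  by (auto simp: pmat_def mats_def)

lemma block_reverse_eq_iff: "i = block_reverse l \<longleftrightarrow> l = block_reverse i"
  using block_reverse_involution by metis

lemma mmult_w0_right: "mmult n M w0 i j = (if i < n \<and> j < n then M i (block_reverse j) else 0)"
proof (cases "i < n \<and> j < n")
  case True
  have "(\<Sum>l<n. M i l * w0 l j) = (\<Sum>l<n. if l = block_reverse j then M i (block_reverse j) else 0)"
    by (rule sum.cong) (auto simp: pmat_def True)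
  then show ?thesis
    using True block_reverse_less by (simp add: mmult_def)
qed (auto simp: mmult_def)

lemma mmult_w0_left: "mmult n w0 M i j = (if i < n \<and> j < n then M (block_reverse i) j else 0)"
proof (cases "i < n \<and> j < n")
  case True
  have "(\<Sum>l<n. w0 i l * M l j) = (\<Sum>l<n. if l = block_reverse i then M (block_reverse i) j else 0)"
    by (rule sum.cong) (use True in \<open>auto simp: pmat_def block_reverse_eq_iff\<close>)
  then show ?thesis
    using True block_reverse_less by (simp add: mmult_def)
qed (auto simp: mmult_def)

lemma w0_involution: "mmult n w0 w0 = idm n"
proof (intro ext)
  fix i j
  show "mmult n w0 w0 i j = idm n i j"
    unfolding mmult_w0_right
    by (simp add: pmat_def idm_def block_reverse_involution block_reverse_less block_reverse_eq_iff)
qed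

lemma w0_GL: "w0 \<in> GL n"
  using w0_involution w0_in_mats by (auto simp: GL_def)

lemma w0_parabolic: "w0 \<in> parabolic n J"
proof -
  have "w0 i j = 0" if "s \<notin> J" "j < s" "s \<le> i" for s i j
    using same_block_gap[OF same_block_sym[OF block_reverse_same_block[of j]] that(1,2)] that
    by (auto simp: pmat_def)
  then show ?thesis
    using w0_in_mats by (auto simp: parabolic_def)
qed

lemma BwB_parabolic: "h \<in> BwB n block_reverse \<Longrightarrow> h \<in> parabolic n J"
  unfolding BwB_def using parabolic_mmult[OF parabolic_mmult[OF Bor_parabolic w0_parabolic] Bor_parabolic]
  by blast

lemma w0_conj_block_lower_Bor:
  assumes X: "X \<in> parabolic n J" "X \<in> GL n" "block_lower J X"
  shows "mmult n (mmult n w0 X) w0 \<in> Bor n"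
proof -
  let ?b = "mmult n (mmult n w0 X) w0"
  have b: "?b i j = (if i < n \<and> j < n then X (block_reverse i) (block_reverse j) else 0)" for i j
    by (simp add: mmult_w0_right mmult_w0_left block_reverse_less)
  have "?b i j = 0" if ji: "j < i" for i j
  proof (cases "same_block J j i")
    case True
    have "same_block J (block_reverse i) (block_reverse j)"
      using same_block_trans[OF same_block_trans[OF block_reverse_same_block same_block_sym[OF True]]
          same_block_sym[OF block_reverse_same_block]] .
    moreover have "block_reverse i < block_reverse j"
      using block_reverse_reverses[OF True ji] .
    ultimately show ?thesis
      using X(3) by (simp add: b block_lower_def)
  next
    case False
    have "\<not> same_block J (block_reverse j) (block_reverse i)"
    proof
      assume "same_block J (block_reverse j) (block_reverse i)"
      then have "same_block J j i"
        using same_block_trans[OF same_block_trans[OF same_block_sym[OF block_reverse_same_block[of j]]]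
            block_reverse_same_block[of i]] by blast
      then show False
        using False by simp
    qed
    then obtain s where "s \<notin> J" "block_reverse j < s" "s \<le> block_reverse i"
      using not_same_block_gap block_reverse_preserves[OF False ji] by blast
    then show ?thesis
      using parabolic_zero[OF X(1)] by (simp add: b)
  qed
  moreover have "?b \<in> GL n"
    using X(2) w0_GL by (simp add: GL_mmult)
  ultimately show ?thesis
    by (simp add: Bor_def)
qed

lemma Schubert_closure_parabolic:
  assumes g: "g \<in> GL n"
    and close: "\<forall>e>0. \<exists>h \<in> BwB n block_reverse. \<forall>i<n. \<forall>j<n. cmod (g i j - h i j) < e"
  shows "g \<in> parabolic n J"
proof -
  have "g i j = 0" if s: "s \<notin> J" "j < s" "s \<le> i" for s i j
  proof (cases "i < n \<and> j < n")
    case True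
    have "cmod (g i j) < e" if "e > 0" for e
      using close that True parabolic_zero[OF BwB_parabolic s] by fastforce
    then show ?thesis
      by (metis order_less_irrefl zero_less_norm_iff)
  qed (use GL_in_mats[OF g] in \<open>auto simp: mats_def\<close>)
  then show ?thesis
    using GL_in_mats[OF g] by (auto simp: parabolic_def)
qed

text \<open>Approximate g w_J by U X as above; then g = (U w_J) (w_J X w_J) up to a small error, and
  the second factor lies in B.\<close>

lemma parabolic_in_Schubert_closure:
  assumes g: "g \<in> parabolic n J" "g \<in> GL n" and e: "e > 0"
  shows "\<exists>h \<in> BwB n block_reverse. \<forall>i<n. \<forall>j<n. cmod (g i j - h i j) < e"
proof -
  define A where "A = mmult n g w0"
  have "A \<in> parabolic n J \<inter> GL n"
    using g by (simp add: A_def parabolic_mmult w0_parabolic GL_mmult w0_GL)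
  then obtain U X where U: "U \<in> Bor n" and X: "X \<in> parabolic n J" "X \<in> GL n" "block_lower J X"
    and close: "\<forall>i<n. \<forall>j<n. cmod (A i j - mmult n U X i j) < e"
    using parabolic_Bor_block_lower_approx e unfolding Bor_block_lower_approx_def by blast
  define h where "h = mmult n (mmult n U w0) (mmult n (mmult n w0 X) w0)"
  have "h \<in> BwB n block_reverse"
    unfolding h_def BwB_def using U w0_conj_block_lower_Bor[OF X] by blast
  moreover have h: "h = mmult n (mmult n U X) w0"
  proof -
    have "h = mmult n U (mmult n (mmult n w0 w0) (mmult n X w0))"
      by (simp add: h_def mmult_assoc)
    also have "\<dots> = mmult n (mmult n U X) w0"
      using GL_in_mats[OF X(2)] by (simp add: w0_involution mmult_idm_left mmult_assoc)
    finally show ?thesis .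
  qed
  moreover have "g = mmult n A w0"
    using GL_in_mats[OF g(2)] by (simp add: A_def mmult_assoc w0_involution mmult_idm_right)
  then have "cmod (g i j - h i j) < e" if "i < n" "j < n" for i j
    using close that block_reverse_less[OF that(2)] by (simp add: h mmult_w0_right)
  ultimately show ?thesis
    by blast
qed

lemma Schubert_longest_eq: "Schubert n (longest n J) = flag_of n ` (parabolic n J \<inter> GL n)"
  unfolding longest_eq_block_reverse Schubert_def
  using Schubert_closure_parabolic parabolic_in_Schubert_closure by blast

end

section \<open>Peterson varieties and Hessenberg matrices\<close>

definition nilmat :: "nat \<Rightarrow> nat \<Rightarrow> nat \<Rightarrow> complex" where
  "nilmat m = (\<lambda>i l. if i < m \<and> l < m \<and> l = i + 1 then 1 else 0)"

text \<open>For invertible g this says that g^-1 N g is upper Hessenberg.\<close>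

definition nil_hessenberg :: "nat \<Rightarrow> (nat \<Rightarrow> nat \<Rightarrow> complex) \<Rightarrow> bool" where
  "nil_hessenberg m g \<longleftrightarrow>
     (\<exists>M \<in> mats m. (\<forall>l j. j + 1 < l \<longrightarrow> M l j = 0) \<and> mmult m (nilmat m) g = mmult m g M)"

definition col_comb :: "nat \<Rightarrow> (nat \<Rightarrow> nat \<Rightarrow> complex) \<Rightarrow> nat \<Rightarrow> (nat \<Rightarrow> complex) \<Rightarrow> nat \<Rightarrow> complex" where
  "col_comb m g i c = (\<lambda>a. if a < m then (\<Sum>j<i. c j * g a j) else 0)"

lemma nilmat_in_mats: "nilmat m \<in> mats m"
  by (auto simp: nilmat_def mats_def)

lemma nilmat_parabolic: "nilmat m \<in> parabolic m J"
  by (rule upper_triangular_parabolic[OF nilmat_in_mats]) (auto simp: nilmat_def)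

lemma mmult_nilmat: "g \<in> mats m \<Longrightarrow> mmult m (nilmat m) g a j = (if a + 1 < m then g (a + 1) j else 0)"
proof (cases "a < m \<and> j < m")
  case True
  have "(\<Sum>l<m. nilmat m a l * g l j) = (\<Sum>l<m. if l = a + 1 then g (a + 1) j else 0)"
    by (rule sum.cong) (auto simp: nilmat_def True)
  then show ?thesis
    using True by (simp add: mmult_def)
qed (auto simp: mmult_def mats_def)

lemma nilp_col_comb: "g \<in> mats m \<Longrightarrow> nilp m (col_comb m g i c) = col_comb m (mmult m (nilmat m) g) i c"
  by (auto simp: fun_eq_iff nilp_def col_comb_def mmult_nilmat)

lemma col_comb_mmult:
  assumes g: "g \<in> mats m" and b: "b \<in> mats m" and b_zero: "\<And>l j. j < i \<Longrightarrow> i' \<le> l \<Longrightarrow> b l j = 0"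
  shows "col_comb m (mmult m g b) i c = col_comb m g i' (\<lambda>l. \<Sum>j<i. b l j * c j)"
proof
  fix a
  show "col_comb m (mmult m g b) i c a = col_comb m g i' (\<lambda>l. \<Sum>j<i. b l j * c j) a"
  proof (cases "a < m")
    case True
    have "(\<Sum>j<i. c j * mmult m g b a j) = (\<Sum>j<i. \<Sum>l<m. g a l * (b l j * c j))"
      using True b by (intro sum.cong) (auto simp: mmult_def mats_def sum_distrib_left mult_ac)
    also have "\<dots> = (\<Sum>l<m. g a l * (\<Sum>j<i. b l j * c j))"
      by (subst sum.swap) (simp add: sum_distrib_left)
    also have "\<dots> = (\<Sum>l<i'. (\<Sum>j<i. b l j * c j) * g a l)"
      using g b_zero by (intro sum.mono_neutral_cong) (auto simp: mats_def mult.commute)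
    finally show ?thesis
      using True by (simp add: col_comb_def)
  qed (simp add: col_comb_def)
qed

lemma fspace_flag_of:
  assumes g: "g \<in> mats m"
  shows "fspace m (flag_of m g) i = range (col_comb m g i)"
proof
  show "range (col_comb m g i) \<subseteq> fspace m (flag_of m g) i"
    using flag_of_self[OF g] by (auto simp: fspace_def col_comb_def)
  show "fspace m (flag_of m g) i \<subseteq> range (col_comb m g i)"
  proof
    fix v
    assume "v \<in> fspace m (flag_of m g) i"
    then obtain b c where b: "b \<in> Bor m" and v: "v = col_comb m (mmult m g b) i c"
      by (auto simp: fspace_def col_comb_def flag_of_iff)
    have "v = col_comb m g i (\<lambda>l. \<Sum>j<i. b l j * c j)"
      unfolding v using b by (intro col_comb_mmult[OF g GL_in_mats[OF Bor_GL]]) (auto simp: Bor_def)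
    then show "v \<in> range (col_comb m g i)"
      by simp
  qed
qed

lemma nil_hessenberg_imp_Pet:
  assumes g: "g \<in> GL m" and h: "nil_hessenberg m g"
  shows "flag_of m g \<in> Pet m"
proof -
  have gm: "g \<in> mats m"
    using GL_in_mats[OF g] .
  obtain M where M: "M \<in> mats m" "\<forall>l j. j + 1 < l \<longrightarrow> M l j = 0"
    "mmult m (nilmat m) g = mmult m g M"
    using h by (auto simp: nil_hessenberg_def)
  have "nilp m ` fspace m (flag_of m g) i \<subseteq> fspace m (flag_of m g) (i + 1)" for i
  proof
    fix w
    assume "w \<in> nilp m ` fspace m (flag_of m g) i"
    then obtain c where w: "w = nilp m (col_comb m g i c)"
      by (auto simp: fspace_flag_of[OF gm])
    have "w = col_comb m (mmult m g M) i c"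
      using w nilp_col_comb[OF gm] M(3) by simp
    also have "\<dots> = col_comb m g (i + 1) (\<lambda>l. \<Sum>j<i. M l j * c j)"
      by (rule col_comb_mmult[OF gm M(1)]) (use M(2) in auto)
    finally show "w \<in> fspace m (flag_of m g) (i + 1)"
      by (simp add: fspace_flag_of[OF gm])
  qed
  then show ?thesis
    using g by (simp add: Pet_def Fl_def)
qed

lemma Pet_nilmat_column:
  assumes g: "g \<in> mats m" and P: "flag_of m g \<in> Pet m" and j: "j + 2 \<le> m"
  obtains c where "\<And>a. a < m \<Longrightarrow> mmult m (nilmat m) g a j = (\<Sum>l<j + 2. c l * g a l)"
proof -
  let ?e = "\<lambda>l. if j = l then 1 else 0"
  have "nilp m ` fspace m (flag_of m g) (j + 1) \<subseteq> fspace m (flag_of m g) (j + 1 + 1)"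
    using P j by (simp add: Pet_def)
  moreover have "col_comb m g (j + 1) ?e \<in> fspace m (flag_of m g) (j + 1)"
    by (simp add: fspace_flag_of[OF g])
  ultimately obtain c where c: "nilp m (col_comb m g (j + 1) ?e) = col_comb m g (j + 2) c"
    by (fastforce simp: fspace_flag_of[OF g])
  have "mmult m (nilmat m) g a j = (\<Sum>l<j + 2. c l * g a l)" if "a < m" for a
  proof -
    have "mmult m (nilmat m) g a j = col_comb m (mmult m (nilmat m) g) (j + 1) ?e a"
      using that by (simp add: col_comb_def sum_delta_mult)
    also have "\<dots> = col_comb m g (j + 2) c a"
      using c nilp_col_comb[OF g] by simp
    finally show ?thesis
      using that by (simp add: col_comb_def)
  qed
  then show thesis
    by (rule that)
qed

lemma Pet_imp_nil_hessenberg: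
  assumes g: "g \<in> GL m" and P: "flag_of m g \<in> Pet m"
  shows "nil_hessenberg m g"
proof -
  have gm: "g \<in> mats m"
    using GL_in_mats[OF g] .
  obtain h where h: "mmult m g h = idm m" "mmult m h g = idm m"
    using GL_inverse[OF g] by blast
  define M where "M = mmult m h (mmult m (nilmat m) g)"
  have "mmult m g M = mmult m (nilmat m) g"
    by (simp add: M_def flip: mmult_assoc) (simp add: h(1) mmult_idm_left nilmat_in_mats)
  moreover have "M l j = 0" if lj: "j + 1 < l" for l j
  proof (cases "l < m")
    case True
    obtain c where c: "\<And>a. a < m \<Longrightarrow> mmult m (nilmat m) g a j = (\<Sum>l<j + 2. c l * g a l)"
      using Pet_nilmat_column[OF gm P, of j] lj True by force
    have "M l j = (\<Sum>a<m. h l a * mmult m (nilmat m) g a j)"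
      using True lj unfolding M_def by (simp add: mmult_def[of m h])
    also have "\<dots> = (\<Sum>a<m. h l a * (\<Sum>l'<j + 2. g a l' * c l'))"
      by (intro sum.cong refl) (simp add: c mult.commute)
    also have "\<dots> = (\<Sum>l'<j + 2. (\<Sum>a<m. h l a * g a l') * c l')"
      by (rule sum_mmult_vector)
    also have "\<dots> = 0"
      using mmult_eq_idm_entry[OF h(2) True] lj True by (intro sum.neutral) auto
    finally show ?thesis .
  qed (simp add: M_def mmult_def)
  ultimately show ?thesis
    unfolding nil_hessenberg_def by (metis mmult_in_mats M_def)
qed

lemma Pet_iff_nil_hessenberg: "g \<in> GL m \<Longrightarrow> flag_of m g \<in> Pet m \<longleftrightarrow> nil_hessenberg m g"
  using Pet_imp_nil_hessenberg nil_hessenberg_imp_Pet by blast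

section \<open>Levi decomposition of P_J\<close>

locale block_decomposition = simple_subset +
  fixes Js :: "nat set list"
  assumes Js_intervals: "\<forall>A \<in> set Js. A \<noteq> {} \<and> (\<exists>a b. A = {a..b})"
    and Js_union: "\<Union> (set Js) = J"
    and Js_disjoint: "\<forall>k < length Js. \<forall>l < length Js. k \<noteq> l \<longrightarrow> Js ! k \<inter> Js ! l = {}"
    and Js_separated: "\<forall>k < length Js. \<forall>l < length Js. k \<noteq> l \<longrightarrow> (\<forall>i \<in> Js ! k. i + 1 \<notin> Js ! l)"
begin

text \<open>Block k of the Levi factor occupies the 0-based indices bstart k, ..., bend k.\<close>

definition bstart :: "nat \<Rightarrow> nat" where
  "bstart k = Min (Js ! k) - 1"

definition bend :: "nat \<Rightarrow> nat" where
  "bend k = Max (Js ! k)"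

definition bsize :: "nat \<Rightarrow> nat" where
  "bsize k = card (Js ! k) + 1"

lemma block_bounds:
  assumes k: "k < length Js"
  shows "Js ! k = {bstart k + 1 .. bend k} \<and> bstart k < bend k \<and> bend k < n \<and>
    bsize k = bend k + 1 - bstart k \<and> Js ! k \<subseteq> J"
proof -
  have mem: "Js ! k \<in> set Js"
    using k by simp
  then have "Js ! k \<noteq> {} \<and> (\<exists>a b. Js ! k = {a..b})"
    using Js_intervals by blast
  then obtain a b where ab: "Js ! k = {a..b}" "a \<le> b"
    by fastforce
  have sub: "Js ! k \<subseteq> J"
    using Js_union mem by blast
  then have "1 \<le> a" "b < n"
    using ab J_pos J_less by auto
  moreover have "Min (Js ! k) = a" "Max (Js ! k) = b"
    unfolding ab using ab(2) by (auto intro: Min_eqI Max_eqI)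
  ultimately show ?thesis
    using ab sub by (simp add: bstart_def bend_def bsize_def) arith
qed

lemma bstart_notin_J:
  assumes k: "k < length Js"
  shows "bstart k \<notin> J"
proof
  assume "bstart k \<in> J"
  then obtain l where l: "l < length Js" "bstart k \<in> Js ! l"
    using Js_union by (auto simp: in_set_conv_nth)
  then have "l \<noteq> k"
    using block_bounds[OF k] by auto
  then have "bstart k + 1 \<notin> Js ! k"
    using Js_separated k l by blast
  then show False
    using block_bounds[OF k] by auto
qed

lemma Suc_bend_notin_J:
  assumes k: "k < length Js"
  shows "bend k + 1 \<notin> J"
proof
  assume "bend k + 1 \<in> J"
  then obtain l where l: "l < length Js" "bend k + 1 \<in> Js ! l"
    using Js_union by (auto simp: in_set_conv_nth)
  then have "l \<noteq> k"
    using block_bounds[OF k] by auto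
  moreover have "bend k \<in> Js ! k"
    using block_bounds[OF k] by auto
  ultimately show False
    using Js_separated k l by blast
qed

lemma J_in_block: "i \<in> J \<Longrightarrow> \<exists>k < length Js. bstart k < i \<and> i \<le> bend k"
  using Js_union block_bounds by (fastforce simp: in_set_conv_nth)

lemma same_block_in_block:
  assumes k: "k < length Js" and x: "bstart k \<le> x" "x \<le> bend k"
  shows "same_block J x y \<longleftrightarrow> bstart k \<le> y \<and> y \<le> bend k"
proof
  assume xy: "same_block J x y"
  show "bstart k \<le> y \<and> y \<le> bend k"
  proof (rule ccontr)
    assume "\<not> (bstart k \<le> y \<and> y \<le> bend k)"
    then consider "y < bstart k" | "bend k < y"
      by linarith
    then show False
    proof cases
      case 1
      then have "min x y < bstart k \<and> bstart k \<le> max x y"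
        using x by simp
      then show False
        using xy bstart_notin_J[OF k] unfolding same_block_def by blast
    next
      case 2
      then have "min x y < bend k + 1 \<and> bend k + 1 \<le> max x y"
        using x by simp
      then show False
        using xy Suc_bend_notin_J[OF k] unfolding same_block_def by blast
    qed
  qed
next
  assume "bstart k \<le> y \<and> y \<le> bend k"
  then show "same_block J x y"
    using x block_bounds[OF k] unfolding same_block_def by fastforce
qed

definition in_some_block :: "nat \<Rightarrow> bool" where
  "in_some_block x \<longleftrightarrow> (\<exists>k < length Js. bstart k \<le> x \<and> x \<le> bend k)"

lemma same_block_outside:
  assumes x: "\<not> in_some_block x"
  shows "same_block J x y \<longleftrightarrow> y = x"
proof
  assume xy: "same_block J x y"
  show "y = x"
  proof (rule ccontr)
    assume "y \<noteq> x"
    then have "min x y < x + 1 \<and> x + 1 \<le> max x y \<or> min x y < x \<and> x \<le> max x y"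
      by linarith
    then have "x + 1 \<in> J \<or> x \<in> J"
      using xy unfolding same_block_def by blast
    then obtain k where "k < length Js" "bstart k \<le> x" "x \<le> bend k"
      using J_in_block by fastforce
    then show False
      using x unfolding in_some_block_def by blast
  qed
qed simp

lemma block_unique:
  assumes k: "k < length Js" and l: "l < length Js"
    and x: "bstart k \<le> x" "x \<le> bend k" "bstart l \<le> x" "x \<le> bend l"
  shows "k = l"
proof (rule ccontr)
  assume kl: "k \<noteq> l"
  have "same_block J x (bstart k + 1)"
    using same_block_in_block[OF k x(1,2)] block_bounds[OF k] by simp
  then have "bstart l \<le> bstart k + 1 \<and> bstart k + 1 \<le> bend l"
    using same_block_in_block[OF l x(3,4)] by simp
  moreover have "bstart k + 1 \<noteq> bstart l"
    using bstart_notin_J[OF l] block_bounds[OF k] by auto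
  ultimately have "bstart k + 1 \<in> Js ! l"
    using block_bounds[OF l] by auto
  moreover have "bstart k + 1 \<in> Js ! k"
    using block_bounds[OF k] by auto
  ultimately show False
    using Js_disjoint k l kl by blast
qed

definition block_of :: "nat \<Rightarrow> nat" where
  "block_of x = (THE k. k < length Js \<and> bstart k \<le> x \<and> x \<le> bend k)"

lemma block_of_eq: "k < length Js \<Longrightarrow> bstart k \<le> x \<Longrightarrow> x \<le> bend k \<Longrightarrow> block_of x = k"
  unfolding block_of_def by (rule the_equality) (auto intro: block_unique)

lemma block_of_in_block:
  "in_some_block x \<Longrightarrow> block_of x < length Js \<and> bstart (block_of x) \<le> x \<and> x \<le> bend (block_of x)"
  unfolding in_some_block_def using block_of_eq by auto

lemma same_block_block_of:
  assumes "same_block J j i" "i \<noteq> j"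
  shows "in_some_block i \<and> bstart (block_of i) \<le> j \<and> j \<le> bend (block_of i)"
proof -
  have "in_some_block i"
    using same_block_outside[of i j] same_block_sym[OF assms(1)] assms(2) by auto
  then show ?thesis
    using block_of_in_block same_block_in_block same_block_sym[OF assms(1)] by blast
qed

lemma bstart_add_in_block:
  "k < length Js \<Longrightarrow> t < bsize k \<Longrightarrow> bstart k \<le> bstart k + t \<and> bstart k + t \<le> bend k \<and> bstart k + t < n"
  using block_bounds[of k] by auto

definition diag_block :: "nat \<Rightarrow> (nat \<Rightarrow> nat \<Rightarrow> complex) \<Rightarrow> (nat \<Rightarrow> nat \<Rightarrow> complex)" where
  "diag_block k g = (\<lambda>i j. if i < bsize k \<and> j < bsize k then g (bstart k + i) (bstart k + j) else 0)"

definition block_diag :: "(nat \<Rightarrow> nat \<Rightarrow> nat \<Rightarrow> complex) \<Rightarrow> (nat \<Rightarrow> nat \<Rightarrow> complex)" where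
  "block_diag G = (\<lambda>i j. if i < n \<and> j < n then
     (if in_some_block i \<and> same_block J i j then G (block_of i) (i - bstart (block_of i)) (j - bstart (block_of i))
      else if i = j then 1 else 0) else 0)"

lemma diag_block_in_mats: "diag_block k g \<in> mats (bsize k)"
  by (auto simp: diag_block_def mats_def)

lemma block_diag_in_mats: "block_diag G \<in> mats n"
  by (auto simp: block_diag_def mats_def)

lemma block_diag_parabolic: "block_diag G \<in> parabolic n J"
proof -
  have "block_diag G i j = 0" if "s \<notin> J" "j < s" "s \<le> i" for s i j
  proof (rule ccontr)
    assume "block_diag G i j \<noteq> 0"
    then have "same_block J j i"
      using same_block_sym by (auto simp: block_diag_def split: if_splits)
    then show False
      using same_block_gap[of J j i s] that by simp
  qed
  then show ?thesis
    using block_diag_in_mats by (auto simp: parabolic_def)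
qed

lemma block_diag_in_block:
  assumes k: "k < length Js" and i: "bstart k \<le> i" "i \<le> bend k"
  shows "block_diag G i j = (if bstart k \<le> j \<and> j \<le> bend k then G k (i - bstart k) (j - bstart k) else 0)"
proof -
  have "in_some_block i" "block_of i = k" "i < n" "bend k < n"
    using k i block_of_eq[OF k i] block_bounds[OF k] by (auto simp: in_some_block_def)
  then show ?thesis
    using same_block_in_block[OF k i, of j] i by (auto simp: block_diag_def)
qed

lemma block_diag_outside:
  "\<not> in_some_block i \<Longrightarrow> block_diag G i j = (if i < n \<and> i = j then 1 else 0)"
  using same_block_outside by (auto simp: block_diag_def)

lemma sum_block:
  assumes k: "k < length Js" and f: "\<And>l. l < n \<Longrightarrow> l < bstart k \<or> bend k < l \<Longrightarrow> f l = 0"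
  shows "(\<Sum>l<n. f l) = (\<Sum>t<bsize k. f (bstart k + t))"
proof -
  have b: "bstart k < bend k" "bend k < n" "bsize k = bend k + 1 - bstart k"
    using block_bounds[OF k] by auto
  have "(\<Sum>l<n. f l) = (\<Sum>l\<in>{bstart k..bend k}. f l)"
    by (rule sum.mono_neutral_right) (use b f in auto)
  also have "{bstart k..bend k} = (\<lambda>t. bstart k + t) ` {..<bsize k}"
  proof
    show "{bstart k..bend k} \<subseteq> (\<lambda>t. bstart k + t) ` {..<bsize k}"
    proof
      fix l
      assume "l \<in> {bstart k..bend k}"
      then have "l = bstart k + (l - bstart k)" "l - bstart k < bsize k"
        using b by auto
      then show "l \<in> (\<lambda>t. bstart k + t) ` {..<bsize k}"
        by blast
    qed
  qed (use b in auto)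
  also have "(\<Sum>l\<in>(\<lambda>t. bstart k + t) ` {..<bsize k}. f l) = (\<Sum>t<bsize k. f (bstart k + t))"
    by (rule sum.reindex_cong[where l="\<lambda>t. bstart k + t"]) (auto simp: inj_on_def)
  finally show ?thesis .
qed

lemma diag_block_mmult:
  assumes k: "k < length Js"
    and zero: "\<And>i j l. i < bsize k \<Longrightarrow> j < bsize k \<Longrightarrow> l < n \<Longrightarrow> l < bstart k \<or> bend k < l \<Longrightarrow>
      g (bstart k + i) l * h l (bstart k + j) = 0"
  shows "diag_block k (mmult n g h) = mmult (bsize k) (diag_block k g) (diag_block k h)"
proof (intro ext)
  fix i j
  show "diag_block k (mmult n g h) i j = mmult (bsize k) (diag_block k g) (diag_block k h) i j"
  proof (cases "i < bsize k \<and> j < bsize k")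
    case True
    have "(\<Sum>l<n. g (bstart k + i) l * h l (bstart k + j)) =
        (\<Sum>t<bsize k. g (bstart k + i) (bstart k + t) * h (bstart k + t) (bstart k + j))"
      by (rule sum_block[OF k]) (use zero True in auto)
    also have "\<dots> = (\<Sum>t<bsize k. diag_block k g i t * diag_block k h t j)"
      by (rule sum.cong) (use True in \<open>auto simp: diag_block_def\<close>)
    finally show ?thesis
      using True bstart_add_in_block[OF k] by (simp add: diag_block_def mmult_def)
  qed (auto simp: diag_block_def mmult_def)
qed

lemma diag_block_mmult_parabolic:
  assumes k: "k < length Js" and g: "g \<in> parabolic n J" and h: "h \<in> parabolic n J"
  shows "diag_block k (mmult n g h) = mmult (bsize k) (diag_block k g) (diag_block k h)"
proof (rule diag_block_mmult[OF k])
  fix i j l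
  assume j: "j < bsize k" and l: "l < bstart k \<or> bend k < l"
  from l show "g (bstart k + i) l * h l (bstart k + j) = 0"
  proof
    assume "l < bstart k"
    then have "g (bstart k + i) l = 0"
      using parabolic_zero[OF g bstart_notin_J[OF k]] by simp
    then show ?thesis
      by simp
  next
    assume "bend k < l"
    moreover have "bstart k + j < bend k + 1"
      using bstart_add_in_block[OF k j] by simp
    ultimately have "h l (bstart k + j) = 0"
      using parabolic_zero[OF h Suc_bend_notin_J[OF k]] by simp
    then show ?thesis
      by simp
  qed
qed

lemma diag_block_idm: "k < length Js \<Longrightarrow> diag_block k (idm n) = idm (bsize k)"
  using bstart_add_in_block by (auto simp: diag_block_def idm_def fun_eq_iff)

lemma diag_block_GL:
  assumes k: "k < length Js" and g: "g \<in> parabolic n J" "g \<in> GL n"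
  shows "diag_block k g \<in> GL (bsize k)"
proof -
  obtain h where h: "h \<in> mats n" "mmult n g h = idm n"
    using g(2) by (auto simp: GL_def)
  have "mmult (bsize k) (diag_block k g) (diag_block k h) = idm (bsize k)"
    using diag_block_mmult_parabolic[OF k g(1) parabolic_inverse[OF g(1) h]] h(2) diag_block_idm[OF k]
    by simp
  then show ?thesis
    using diag_block_in_mats by (auto simp: GL_def)
qed

lemma diag_block_Bor:
  assumes k: "k < length Js" and b: "b \<in> Bor n"
  shows "diag_block k b \<in> Bor (bsize k)"
  using diag_block_GL[OF k Bor_parabolic[OF b] Bor_GL[OF b]] b
  by (auto simp: Bor_def diag_block_def)

lemma diag_block_block_diag:
  assumes k: "k < length Js" and G: "G k \<in> mats (bsize k)"
  shows "diag_block k (block_diag G) = G k"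
proof (intro ext)
  fix i j
  show "diag_block k (block_diag G) i j = G k i j"
  proof (cases "i < bsize k \<and> j < bsize k")
    case True
    then show ?thesis
      using bstart_add_in_block[OF k, of i] bstart_add_in_block[OF k, of j]
      by (simp add: diag_block_def block_diag_in_block[OF k])
  qed (use G in \<open>auto simp: diag_block_def mats_def\<close>)
qed

lemma diag_block_nilmat:
  assumes k: "k < length Js"
  shows "diag_block k (nilmat n) = nilmat (bsize k)"
proof (intro ext)
  fix i j
  show "diag_block k (nilmat n) i j = nilmat (bsize k) i j"
  proof (cases "i < bsize k \<and> j < bsize k")
    case True
    then show ?thesis
      using bstart_add_in_block[OF k, of i] bstart_add_in_block[OF k, of j]
      by (auto simp: diag_block_def nilmat_def)
  qed (auto simp: diag_block_def nilmat_def)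
qed

lemma block_diag_mmult_in_block:
  assumes G: "G k \<in> mats (bsize k)" and H: "H k \<in> mats (bsize k)"
    and k: "k < length Js" "bstart k \<le> i" "i \<le> bend k"
  shows "(\<Sum>l<n. block_diag G i l * block_diag H l j) = block_diag (\<lambda>k. mmult (bsize k) (G k) (H k)) i j"
proof -
  have "(\<Sum>l<n. block_diag G i l * block_diag H l j) =
      (\<Sum>t<bsize k. block_diag G i (bstart k + t) * block_diag H (bstart k + t) j)"
    by (rule sum_block[OF k(1)]) (auto simp: block_diag_in_block[OF k])
  also have "\<dots> = (\<Sum>t<bsize k. G k (i - bstart k) t *
      (if bstart k \<le> j \<and> j \<le> bend k then H k t (j - bstart k) else 0))"
    using bstart_add_in_block[OF k(1)]
    by (intro sum.cong) (simp_all add: block_diag_in_block[OF k] block_diag_in_block[OF k(1)])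
  also have "\<dots> = block_diag (\<lambda>k. mmult (bsize k) (G k) (H k)) i j"
    using block_bounds[OF k(1)] k by (auto simp: block_diag_in_block[OF k] mmult_def)
  finally show ?thesis .
qed

lemma block_diag_mmult:
  assumes G: "\<And>k. k < length Js \<Longrightarrow> G k \<in> mats (bsize k)"
    and H: "\<And>k. k < length Js \<Longrightarrow> H k \<in> mats (bsize k)"
  shows "mmult n (block_diag G) (block_diag H) = block_diag (\<lambda>k. mmult (bsize k) (G k) (H k))"
proof (intro ext)
  fix i j
  show "mmult n (block_diag G) (block_diag H) i j = block_diag (\<lambda>k. mmult (bsize k) (G k) (H k)) i j"
  proof (cases "i < n \<and> j < n")
    case True
    show ?thesis
    proof (cases "in_some_block i")
      case True
      define k where "k = block_of i"
      have k: "k < length Js" "bstart k \<le> i" "i \<le> bend k"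
        using block_of_in_block[OF True] by (simp_all add: k_def)
      show ?thesis
        using \<open>i < n \<and> j < n\<close> block_diag_mmult_in_block[where G=G and H=H, OF G[OF k(1)] H[OF k(1)] k]
        by (simp add: mmult_def)
    next
      case False
      have "(\<Sum>l<n. block_diag G i l * block_diag H l j) = (\<Sum>l<n. if l = i then block_diag H i j else 0)"
        by (rule sum.cong) (auto simp: block_diag_outside[OF False])
      then have "(\<Sum>l<n. block_diag G i l * block_diag H l j) = block_diag H i j"
        using \<open>i < n \<and> j < n\<close> by simp
      then show ?thesis
        using \<open>i < n \<and> j < n\<close> by (simp add: mmult_def block_diag_outside[OF False])
    qed
  qed (auto simp: mmult_def block_diag_def)
qed

lemma block_diag_idm: "block_diag (\<lambda>k. idm (bsize k)) = idm n"
proof (intro ext)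
  fix i j
  show "block_diag (\<lambda>k. idm (bsize k)) i j = idm n i j"
  proof (cases "in_some_block i")
    case True
    then show ?thesis
      using block_of_in_block[OF True] block_bounds[of "block_of i"]
      by (auto simp: block_diag_in_block idm_def)
  qed (auto simp: block_diag_outside idm_def)
qed

lemma block_diag_inverse:
  assumes "\<And>k. k < length Js \<Longrightarrow> G k \<in> mats (bsize k)" "\<And>k. k < length Js \<Longrightarrow> H k \<in> mats (bsize k)"
    and "\<And>k. k < length Js \<Longrightarrow> mmult (bsize k) (G k) (H k) = idm (bsize k)"
  shows "mmult n (block_diag G) (block_diag H) = idm n"
proof -
  have "block_diag (\<lambda>k. mmult (bsize k) (G k) (H k)) = block_diag (\<lambda>k. idm (bsize k))"
    unfolding block_diag_def using assms(3) block_of_in_block by (auto simp: fun_eq_iff)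
  then show ?thesis
    using block_diag_mmult[OF assms(1,2)] block_diag_idm by simp
qed

lemma GL_family_inverse:
  assumes "\<And>k. k < length Js \<Longrightarrow> G k \<in> GL (bsize k)"
  obtains H where "\<And>k. k < length Js \<Longrightarrow> H k \<in> GL (bsize k) \<and>
    mmult (bsize k) (G k) (H k) = idm (bsize k) \<and> mmult (bsize k) (H k) (G k) = idm (bsize k)"
proof -
  have "\<forall>k. \<exists>h. k < length Js \<longrightarrow> h \<in> GL (bsize k) \<and>
      mmult (bsize k) (G k) h = idm (bsize k) \<and> mmult (bsize k) h (G k) = idm (bsize k)"
    using assms GL_inverse by metis
  then obtain H where "\<forall>k. k < length Js \<longrightarrow> H k \<in> GL (bsize k) \<and>
      mmult (bsize k) (G k) (H k) = idm (bsize k) \<and> mmult (bsize k) (H k) (G k) = idm (bsize k)"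
    by metis
  then show thesis
    using that by blast
qed

lemma block_diag_GL:
  assumes G: "\<And>k. k < length Js \<Longrightarrow> G k \<in> GL (bsize k)"
  shows "block_diag G \<in> GL n"
proof -
  obtain H where H: "\<And>k. k < length Js \<Longrightarrow> H k \<in> GL (bsize k) \<and>
      mmult (bsize k) (G k) (H k) = idm (bsize k) \<and> mmult (bsize k) (H k) (G k) = idm (bsize k)"
    using GL_family_inverse[OF G] by blast
  have "mmult n (block_diag G) (block_diag H) = idm n"
    by (rule block_diag_inverse) (use G H GL_in_mats in auto)
  then show ?thesis
    using block_diag_in_mats by (auto simp: GL_def)
qed

lemma block_diag_Bor:
  assumes G: "\<And>k. k < length Js \<Longrightarrow> G k \<in> Bor (bsize k)"
  shows "block_diag G \<in> Bor n"
proof -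
  have "block_diag G i j = 0" if ji: "j < i" for i j
  proof (cases "in_some_block i")
    case True
    then show ?thesis
      using block_of_in_block[OF True] G ji by (auto simp: block_diag_in_block Bor_def)
  qed (use ji in \<open>simp add: block_diag_outside\<close>)
  moreover have "block_diag G \<in> GL n"
    by (rule block_diag_GL) (use G Bor_GL in auto)
  ultimately show ?thesis
    by (simp add: Bor_def)
qed

lemma parabolic_lower_entry:
  assumes M: "M \<in> parabolic n J" and jl: "j < l"
    and blocks: "\<And>k. k < length Js \<Longrightarrow> bstart k \<le> j \<Longrightarrow> l \<le> bend k \<Longrightarrow>
      diag_block k M (l - bstart k) (j - bstart k) = 0"
  shows "M l j = 0"
proof (cases "same_block J j l")
  case False
  then obtain s where "s \<notin> J" "j < s" "s \<le> l"
    using not_same_block_gap[OF jl] by blast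
  then show ?thesis
    using parabolic_zero[OF M] by simp
next
  case True
  define k where "k = block_of l"
  have k: "k < length Js" "bstart k \<le> l" "l \<le> bend k" "bstart k \<le> j" "j \<le> bend k"
    using same_block_block_of[OF True] jl block_of_in_block by (auto simp: k_def)
  moreover have "l - bstart k < bsize k" "j - bstart k < bsize k"
    using k block_bounds[OF k(1)] by auto
  ultimately have "M l j = diag_block k M (l - bstart k) (j - bstart k)"
    by (simp add: diag_block_def)
  then show ?thesis
    using blocks k by simp
qed

lemma diag_block_conj:
  assumes k: "k < length Js" and G: "G k \<in> mats (bsize k)" and H: "H k \<in> mats (bsize k)"
    and X: "X \<in> parabolic n J"
  shows "diag_block k (mmult n (mmult n (block_diag H) X) (block_diag G)) =
    mmult (bsize k) (mmult (bsize k) (H k) (diag_block k X)) (G k)"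
  by (simp add: diag_block_mmult_parabolic[OF k] parabolic_mmult block_diag_parabolic X
      diag_block_block_diag[where G=G, OF k G] diag_block_block_diag[where G=H, OF k H])

text \<open>Multiplying g on the left by the inverse of its block diagonal part leaves an upper
  triangular matrix, because g lies in P_J.\<close>

lemma Levi_factorization:
  assumes g: "g \<in> parabolic n J" "g \<in> GL n"
  shows "\<exists>u \<in> Bor n. g = mmult n (block_diag (\<lambda>k. diag_block k g)) u"
proof -
  obtain H where H: "\<And>k. k < length Js \<Longrightarrow> H k \<in> GL (bsize k) \<and>
      mmult (bsize k) (diag_block k g) (H k) = idm (bsize k) \<and>
      mmult (bsize k) (H k) (diag_block k g) = idm (bsize k)"
    using GL_family_inverse[of "\<lambda>k. diag_block k g"] diag_block_GL[OF _ g] by blast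
  have inv: "mmult n (block_diag (\<lambda>k. diag_block k g)) (block_diag H) = idm n"
    by (rule block_diag_inverse) (use H diag_block_in_mats GL_in_mats in auto)
  define u where "u = mmult n (block_diag H) g"
  have u_parabolic: "u \<in> parabolic n J"
    by (simp add: u_def parabolic_mmult block_diag_parabolic g(1))
  have "u i j = 0" if ji: "j < i" for i j
  proof (rule parabolic_lower_entry[OF u_parabolic ji])
    fix k
    assume k: "k < length Js" "bstart k \<le> j" "i \<le> bend k"
    have "diag_block k u = mmult (bsize k) (H k) (diag_block k g)"
      unfolding u_def using H[OF k(1)] GL_in_mats
      by (simp add: diag_block_mmult_parabolic[OF k(1) block_diag_parabolic g(1)] diag_block_block_diag[OF k(1)])
    also have "\<dots> = idm (bsize k)"
      using H[OF k(1)] by simp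
    moreover have "i - bstart k \<noteq> j - bstart k"
      using ji k by linarith
    ultimately show "diag_block k u (i - bstart k) (j - bstart k) = 0"
      by (simp add: idm_def)
  qed
  moreover have "block_diag H \<in> GL n"
    by (rule block_diag_GL) (use H in auto)
  ultimately have "u \<in> Bor n"
    using GL_mmult[OF _ g(2)] by (simp add: u_def Bor_def)
  moreover have "g = mmult n (block_diag (\<lambda>k. diag_block k g)) u"
    unfolding u_def by (simp add: inv mmult_idm_left GL_in_mats[OF g(2)] flip: mmult_assoc)
  ultimately show ?thesis
    by blast
qed

lemma nil_hessenberg_diag_block:
  assumes G: "G k \<in> GL (bsize k)" and k: "k < length Js" and h: "nil_hessenberg n (block_diag G)"
  shows "nil_hessenberg (bsize k) (G k)"
proof -
  obtain M where M: "\<forall>l j. j + 1 < l \<longrightarrow> M l j = 0"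
    "mmult n (nilmat n) (block_diag G) = mmult n (block_diag G) M"
    using h by (auto simp: nil_hessenberg_def)
  have Gk: "G k \<in> mats (bsize k)"
    using G GL_in_mats by auto
  have "mmult (bsize k) (nilmat (bsize k)) (G k) = diag_block k (mmult n (nilmat n) (block_diag G))"
    using diag_block_mmult_parabolic[OF k nilmat_parabolic block_diag_parabolic]
    by (simp add: diag_block_nilmat[OF k] diag_block_block_diag[where G=G, OF k Gk])
  also have "\<dots> = mmult (bsize k) (diag_block k (block_diag G)) (diag_block k M)"
    unfolding M(2) using bstart_add_in_block[OF k]
    by (intro diag_block_mmult[OF k]) (auto simp: block_diag_in_block[OF k])
  finally have "mmult (bsize k) (nilmat (bsize k)) (G k) = mmult (bsize k) (G k) (diag_block k M)"
    by (simp add: diag_block_block_diag[where G=G, OF k Gk])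
  moreover have "\<forall>l j. j + 1 < l \<longrightarrow> diag_block k M l j = 0"
    using M(1) by (auto simp: diag_block_def)
  ultimately show ?thesis
    unfolding nil_hessenberg_def using diag_block_in_mats by blast
qed

lemma block_diag_nil_hessenberg:
  assumes G: "\<And>k. k < length Js \<Longrightarrow> G k \<in> GL (bsize k)"
    and h: "\<And>k. k < length Js \<Longrightarrow> nil_hessenberg (bsize k) (G k)"
  shows "nil_hessenberg n (block_diag G)"
proof -
  obtain H where H: "\<And>k. k < length Js \<Longrightarrow> H k \<in> GL (bsize k) \<and>
      mmult (bsize k) (G k) (H k) = idm (bsize k) \<and> mmult (bsize k) (H k) (G k) = idm (bsize k)"
    using GL_family_inverse[OF G] by blast
  have inv: "mmult n (block_diag G) (block_diag H) = idm n"
    by (rule block_diag_inverse) (use H G GL_in_mats in auto)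
  define M where "M = mmult n (mmult n (block_diag H) (nilmat n)) (block_diag G)"
  have M_parabolic: "M \<in> parabolic n J"
    by (simp add: M_def parabolic_mmult block_diag_parabolic nilmat_parabolic)
  have "M l j = 0" if lj: "j + 1 < l" for l j
  proof (rule parabolic_lower_entry[OF M_parabolic])
    show "j < l"
      using lj by simp
    fix k
    assume k: "k < length Js" "bstart k \<le> j" "l \<le> bend k"
    let ?m = "bsize k"
    have Gk: "G k \<in> mats ?m" and Hk: "H k \<in> mats ?m"
      using G[OF k(1)] H[OF k(1)] GL_in_mats by auto
    obtain Mk where Mk: "Mk \<in> mats ?m" "\<forall>l j. j + 1 < l \<longrightarrow> Mk l j = 0"
      "mmult ?m (nilmat ?m) (G k) = mmult ?m (G k) Mk"
      using h[OF k(1)] by (auto simp: nil_hessenberg_def)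
    have "diag_block k M = mmult ?m (H k) (mmult ?m (nilmat ?m) (G k))"
      unfolding M_def diag_block_conj[where G=G and H=H, OF k(1) Gk Hk nilmat_parabolic] diag_block_nilmat[OF k(1)]
      by (simp add: mmult_assoc)
    also have "\<dots> = mmult ?m (mmult ?m (H k) (G k)) Mk"
      using Mk(3) by (simp add: mmult_assoc)
    also have "\<dots> = Mk"
      using H[OF k(1)] Mk(1) by (simp add: mmult_idm_left)
    moreover have "j - bstart k + 1 < l - bstart k"
      using lj k by linarith
    ultimately show "diag_block k M (l - bstart k) (j - bstart k) = 0"
      using Mk(2) by simp
  qed
  moreover have "mmult n (nilmat n) (block_diag G) = mmult n (block_diag G) M"
    unfolding M_def by (simp add: inv mmult_idm_left nilmat_in_mats flip: mmult_assoc)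
  ultimately show ?thesis
    unfolding nil_hessenberg_def by (metis mmult_in_mats M_def)
qed

lemma nil_hessenberg_block_diag_iff:
  assumes "\<And>k. k < length Js \<Longrightarrow> G k \<in> GL (bsize k)"
  shows "nil_hessenberg n (block_diag G) \<longleftrightarrow> (\<forall>k < length Js. nil_hessenberg (bsize k) (G k))"
  using assms nil_hessenberg_diag_block block_diag_nil_hessenberg by blast

end

section \<open>The isomorphism\<close>

context block_decomposition
begin

lemma XJ_iff: "F \<in> XJ n J \<longleftrightarrow> (\<exists>g \<in> parabolic n J \<inter> GL n. F = flag_of n g \<and> nil_hessenberg n g)"
  unfolding XJ_def Schubert_longest_eq using Pet_iff_nil_hessenberg by blast

text \<open>X_J as a subvariety of Fl_n, viewed as a product of flag varieties with one factor.\<close>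

definition XJ_points :: "(nat \<Rightarrow> nat \<Rightarrow> complex) set list set" where
  "XJ_points = {[F] | F. F \<in> XJ n J}"

lemma XJ_points_iff:
  "x \<in> XJ_points \<longleftrightarrow> (\<exists>g \<in> parabolic n J \<inter> GL n. nil_hessenberg n g \<and> x = [flag_of n g])"
  unfolding XJ_points_def XJ_iff by blast

text \<open>The flags of the diagonal blocks do not depend on the choice of representative.\<close>

definition parabolic_rep :: "(nat \<Rightarrow> nat \<Rightarrow> complex) set \<Rightarrow> (nat \<Rightarrow> nat \<Rightarrow> complex)" where
  "parabolic_rep F = (SOME g. g \<in> parabolic n J \<inter> GL n \<and> F = flag_of n g)"

definition block_flags :: "(nat \<Rightarrow> nat \<Rightarrow> complex) set list \<Rightarrow> (nat \<Rightarrow> nat \<Rightarrow> complex) set list" where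
  "block_flags Fs = map (\<lambda>k. flag_of (bsize k) (diag_block k (parabolic_rep (hd Fs)))) [0..<length Js]"

lemma flag_of_diag_block_eq:
  assumes k: "k < length Js" and g: "g \<in> parabolic n J" and g': "g' \<in> GL n"
    and eq: "flag_of n g = flag_of n g'"
  shows "flag_of (bsize k) (diag_block k g') = flag_of (bsize k) (diag_block k g)"
proof -
  have "g' \<in> flag_of n g"
    using eq flag_of_self[OF GL_in_mats[OF g']] by simp
  then obtain b where b: "b \<in> Bor n" "g' = mmult n g b"
    by (auto simp: flag_of_iff)
  then have "diag_block k g' = mmult (bsize k) (diag_block k g) (diag_block k b)"
    using diag_block_mmult_parabolic[OF k g Bor_parabolic] by simp
  then have "diag_block k g' \<in> flag_of (bsize k) (diag_block k g)"
    using diag_block_Bor[OF k b(1)] by (auto simp: flag_of_iff)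
  then show ?thesis
    by (rule flag_of_eq)
qed

lemma block_flags_flag_of:
  assumes g: "g \<in> parabolic n J" "g \<in> GL n"
  shows "block_flags [flag_of n g] = map (\<lambda>k. flag_of (bsize k) (diag_block k g)) [0..<length Js]"
proof -
  have "parabolic_rep (flag_of n g) \<in> parabolic n J \<inter> GL n \<and>
      flag_of n g = flag_of n (parabolic_rep (flag_of n g))"
    unfolding parabolic_rep_def by (rule someI[of _ g]) (use g in simp)
  then have rep: "parabolic_rep (flag_of n g) \<in> parabolic n J"
    "flag_of n (parabolic_rep (flag_of n g)) = flag_of n g"
    by auto
  show ?thesis
    unfolding block_flags_def
  proof (rule map_cong)
    fix k
    assume "k \<in> set [0..<length Js]"
    then show "flag_of (bsize k) (diag_block k (parabolic_rep (hd [flag_of n g]))) =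
        flag_of (bsize k) (diag_block k g)"
      using flag_of_diag_block_eq[OF _ rep(1) g(2) rep(2)] by simp
  qed simp
qed

lemma flag_of_Levi:
  assumes g: "g \<in> parabolic n J" "g \<in> GL n"
  shows "flag_of n g = flag_of n (block_diag (\<lambda>k. diag_block k g))"
proof -
  have "g \<in> flag_of n (block_diag (\<lambda>k. diag_block k g))"
    using Levi_factorization[OF g] by (auto simp: flag_of_iff)
  then show ?thesis
    by (rule flag_of_eq)
qed

lemma Pet_diag_block:
  assumes k: "k < length Js" and g: "g \<in> parabolic n J" "g \<in> GL n" and h: "nil_hessenberg n g"
  shows "flag_of (bsize k) (diag_block k g) \<in> Pet (bsize k)"
proof -
  have G: "\<And>k. k < length Js \<Longrightarrow> diag_block k g \<in> GL (bsize k)"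
    using diag_block_GL g by blast
  have "flag_of n (block_diag (\<lambda>k. diag_block k g)) \<in> Pet n"
    using flag_of_Levi[OF g] Pet_iff_nil_hessenberg[OF g(2)] h by simp
  then have "nil_hessenberg n (block_diag (\<lambda>k. diag_block k g))"
    using Pet_iff_nil_hessenberg[OF block_diag_GL[OF G]] by simp
  then show ?thesis
    using nil_hessenberg_block_diag_iff[OF G] G[OF k] Pet_iff_nil_hessenberg k by blast
qed

lemma bsize_nth: "k < length Js \<Longrightarrow> map (\<lambda>A. card A + 1) Js ! k = bsize k"
  by (simp add: bsize_def)

lemma block_flags_in_prod_Pet:
  assumes "x \<in> XJ_points"
  shows "block_flags x \<in> prod_Pet (map (\<lambda>A. card A + 1) Js)"
proof -
  obtain g where g: "g \<in> parabolic n J" "g \<in> GL n" "nil_hessenberg n g" "x = [flag_of n g]"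
    using assms by (auto simp: XJ_points_iff)
  then show ?thesis
    using Pet_diag_block[OF _ g(1-3)] by (simp add: block_flags_flag_of prod_Pet_def bsize_def)
qed

lemma block_flags_inj: "inj_on block_flags XJ_points"
proof (rule inj_onI)
  fix x y
  assume "x \<in> XJ_points" "y \<in> XJ_points" and eq: "block_flags x = block_flags y"
  then obtain g g' where g: "g \<in> parabolic n J" "g \<in> GL n" "x = [flag_of n g]"
    and g': "g' \<in> parabolic n J" "g' \<in> GL n" "y = [flag_of n g']"
    by (auto simp: XJ_points_iff)
  have "\<forall>k. \<exists>c. k < length Js \<longrightarrow> c \<in> Bor (bsize k) \<and> diag_block k g' = mmult (bsize k) (diag_block k g) c"
  proof
    fix k
    show "\<exists>c. k < length Js \<longrightarrow> c \<in> Bor (bsize k) \<and> diag_block k g' = mmult (bsize k) (diag_block k g) c"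
    proof (cases "k < length Js")
      case True
      have "block_flags x ! k = flag_of (bsize k) (diag_block k g)"
        "block_flags y ! k = flag_of (bsize k) (diag_block k g')"
        using True g(3) g'(3) block_flags_flag_of[OF g(1,2)] block_flags_flag_of[OF g'(1,2)] by simp_all
      then have "flag_of (bsize k) (diag_block k g) = flag_of (bsize k) (diag_block k g')"
        using eq by simp
      then have "diag_block k g' \<in> flag_of (bsize k) (diag_block k g)"
        using flag_of_self[OF diag_block_in_mats, of k g'] by simp
      then show ?thesis
        by (auto simp: flag_of_iff)
    qed simp
  qed
  then obtain C where C: "\<And>k. k < length Js \<Longrightarrow> C k \<in> Bor (bsize k) \<and>
      diag_block k g' = mmult (bsize k) (diag_block k g) (C k)"
    by metis
  have "block_diag (\<lambda>k. diag_block k g') = block_diag (\<lambda>k. mmult (bsize k) (diag_block k g) (C k))"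
    unfolding block_diag_def using C block_of_in_block by (auto simp: fun_eq_iff)
  also have "\<dots> = mmult n (block_diag (\<lambda>k. diag_block k g)) (block_diag C)"
    by (rule block_diag_mmult[symmetric]) (use C diag_block_in_mats Bor_GL GL_in_mats in auto)
  finally have "block_diag (\<lambda>k. diag_block k g') \<in> flag_of n (block_diag (\<lambda>k. diag_block k g))"
    using block_diag_Bor C by (auto simp: flag_of_iff)
  then have "flag_of n (block_diag (\<lambda>k. diag_block k g')) = flag_of n (block_diag (\<lambda>k. diag_block k g))"
    by (rule flag_of_eq)
  then show "x = y"
    using g(3) g'(3) flag_of_Levi[OF g(1,2)] flag_of_Levi[OF g'(1,2)] by simp
qed

lemma block_diag_XJ_points:
  assumes G: "\<And>k. k < length Js \<Longrightarrow> G k \<in> GL (bsize k)"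
    and P: "\<And>k. k < length Js \<Longrightarrow> flag_of (bsize k) (G k) \<in> Pet (bsize k)"
  shows "[flag_of n (block_diag G)] \<in> XJ_points"
    and "block_flags [flag_of n (block_diag G)] = map (\<lambda>k. flag_of (bsize k) (G k)) [0..<length Js]"
proof -
  have "nil_hessenberg n (block_diag G)"
    using nil_hessenberg_block_diag_iff[OF G] P Pet_iff_nil_hessenberg G by blast
  then show "[flag_of n (block_diag G)] \<in> XJ_points"
    using block_diag_parabolic block_diag_GL[OF G] by (auto simp: XJ_points_iff)
  show "block_flags [flag_of n (block_diag G)] = map (\<lambda>k. flag_of (bsize k) (G k)) [0..<length Js]"
    using block_flags_flag_of[OF block_diag_parabolic block_diag_GL[OF G]] diag_block_block_diag G
      GL_in_mats by simp
qed

lemma prod_Pet_lift: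
  assumes "Fs \<in> prod_Pet (map (\<lambda>A. card A + 1) Js)"
  obtains G where "\<And>k. k < length Js \<Longrightarrow> G k \<in> GL (bsize k) \<and> Fs ! k = flag_of (bsize k) (G k)"
proof -
  have "\<forall>k. \<exists>g. k < length Js \<longrightarrow> g \<in> GL (bsize k) \<and> Fs ! k = flag_of (bsize k) g"
    using assms by (auto simp: prod_Pet_def Pet_def Fl_def bsize_def)
  then show thesis
    using that by metis
qed

lemma block_flags_surj: "prod_Pet (map (\<lambda>A. card A + 1) Js) \<subseteq> block_flags ` XJ_points"
proof
  fix Fs
  assume Fs: "Fs \<in> prod_Pet (map (\<lambda>A. card A + 1) Js)"
  obtain G where G: "\<And>k. k < length Js \<Longrightarrow> G k \<in> GL (bsize k) \<and> Fs ! k = flag_of (bsize k) (G k)"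
    using prod_Pet_lift[OF Fs] by blast
  have P: "flag_of (bsize k) (G k) \<in> Pet (bsize k)" if "k < length Js" for k
    using Fs G that by (auto simp: prod_Pet_def bsize_def)
  have "block_flags [flag_of n (block_diag G)] = Fs"
    using block_diag_XJ_points(2)[OF _ P] G Fs by (auto simp: prod_Pet_def intro: nth_equalityI)
  then show "Fs \<in> block_flags ` XJ_points"
    using block_diag_XJ_points(1)[OF _ P] G by blast
qed

lemma block_flags_bij: "bij_betw block_flags XJ_points (prod_Pet (map (\<lambda>A. card A + 1) Js))"
  unfolding bij_betw_def using block_flags_inj block_flags_in_prod_Pet block_flags_surj by blast

lemma mflag_Js: "mflag (map (\<lambda>A. card A + 1) Js) G = map (\<lambda>k. flag_of (bsize k) (G k)) [0..<length Js]"
  by (simp add: mflag_def bsize_def)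

text \<open>Both maps come from polynomial maps of representatives, so no denominators are needed.\<close>

lemma block_flags_morphism: "morphism [n] XJ_points (map (\<lambda>A. card A + 1) Js) block_flags"
  unfolding morphism_def
proof
  fix G0
  let ?ms = "map (\<lambda>A. card A + 1) Js"
  let ?P = "\<lambda>k i j (G :: nat \<Rightarrow> nat \<Rightarrow> nat \<Rightarrow> complex). G 0 (bstart k + i) (bstart k + j)"
  have "let H = (\<lambda>k i j. if k < length ?ms \<and> i < ?ms ! k \<and> j < ?ms ! k then ?P k i j G else 0)
      in (\<forall>k < length ?ms. H k \<in> GL (?ms ! k)) \<and> mflag ?ms H = block_flags (mflag [n] G)"
    if G: "G \<in> lifts [n] XJ_points" for G
  proof -
    have G0: "G 0 \<in> GL n" "[flag_of n (G 0)] \<in> XJ_points"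
      using G by (auto simp: lifts_def mflag_def)
    then obtain g where "g \<in> parabolic n J" "flag_of n (G 0) = flag_of n g"
      by (auto simp: XJ_points_iff)
    then have G0_parabolic: "G 0 \<in> parabolic n J"
      using flag_of_parabolic flag_of_self[OF GL_in_mats[OF G0(1)]] by metis
    define H where "H = (\<lambda>k i j. if k < length ?ms \<and> i < ?ms ! k \<and> j < ?ms ! k then ?P k i j G else 0)"
    have H: "H k = diag_block k (G 0)" if "k < length Js" for k
      using that by (auto simp: H_def diag_block_def bsize_def fun_eq_iff)
    have "\<forall>k < length ?ms. H k \<in> GL (?ms ! k)"
      using H diag_block_GL[OF _ G0_parabolic G0(1)] by (simp add: bsize_def)
    moreover have "mflag ?ms H = block_flags (mflag [n] G)"
    proof -
      have "mflag ?ms H = map (\<lambda>k. flag_of (bsize k) (diag_block k (G 0))) [0..<length Js]"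
        unfolding mflag_Js using H by simp
      then show ?thesis
        by (simp add: block_flags_flag_of[OF G0_parabolic G0(1)] mflag_def[of "[n]"])
    qed
    ultimately show ?thesis
      by (simp add: H_def Let_def)
  qed
  then show "\<exists>P q. q \<in> polyfun \<and> (\<forall>k i j. P k i j \<in> polyfun) \<and> q G0 \<noteq> 0 \<and>
      (\<forall>G \<in> lifts [n] XJ_points. q G \<noteq> 0 \<longrightarrow>
        (let H = \<lambda>k i j. if k < length ?ms \<and> i < ?ms ! k \<and> j < ?ms ! k then P k i j G else 0
         in (\<forall>k < length ?ms. H k \<in> GL (?ms ! k)) \<and> mflag ?ms H = block_flags (mflag [n] G)))"
    by (intro exI[of _ ?P] exI[of _ "\<lambda>_. 1"]) (auto intro: polyfun.intros)
qed

lemma block_diag_polyfun: "(\<lambda>G. block_diag G i j) \<in> polyfun"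
proof (cases "i < n \<and> j < n \<and> in_some_block i \<and> same_block J i j")
  case True
  then have "(\<lambda>G. block_diag G i j) = (\<lambda>G. G (block_of i) (i - bstart (block_of i)) (j - bstart (block_of i)))"
    by (simp add: block_diag_def fun_eq_iff)
  then show ?thesis
    by (simp add: polyfun.pf_coord)
next
  case False
  then have "(\<lambda>G. block_diag G i j) = (\<lambda>G. if i < n \<and> j < n \<and> i = j then 1 else 0)"
    by (auto simp: block_diag_def fun_eq_iff)
  then show ?thesis
    by (simp add: polyfun.pf_const)
qed

lemma block_flags_inverse_morphism:
  "morphism (map (\<lambda>A. card A + 1) Js) (prod_Pet (map (\<lambda>A. card A + 1) Js)) [n]
     (inv_into XJ_points block_flags)"
  unfolding morphism_def
proof
  fix G0
  let ?ms = "map (\<lambda>A. card A + 1) Js"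
  let ?P = "\<lambda>(k::nat) i j G. block_diag G i j"
  have "let H = (\<lambda>k i j. if k < length [n] \<and> i < [n] ! k \<and> j < [n] ! k then ?P k i j G else 0)
      in (\<forall>k < length [n]. H k \<in> GL ([n] ! k)) \<and> mflag [n] H = inv_into XJ_points block_flags (mflag ?ms G)"
    if G: "G \<in> lifts ?ms (prod_Pet ?ms)" for G
  proof -
    have Gk: "G k \<in> GL (bsize k)" if "k < length Js" for k
      using G that by (auto simp: lifts_def bsize_def)
    have P: "flag_of (bsize k) (G k) \<in> Pet (bsize k)" if "k < length Js" for k
    proof -
      have "mflag ?ms G \<in> prod_Pet ?ms"
        using G by (simp add: lifts_def)
      then have "mflag ?ms G ! k \<in> Pet (?ms ! k)"
        using that by (simp add: prod_Pet_def)
      then show ?thesis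
        using that unfolding mflag_Js bsize_nth[OF that] by simp
    qed
    have "inv_into XJ_points block_flags (mflag ?ms G) = [flag_of n (block_diag G)]"
      unfolding mflag_Js by (rule inv_into_f_eq[OF block_flags_inj block_diag_XJ_points[OF Gk P]])
    moreover have "(\<lambda>k i j. if k < length [n] \<and> i < [n] ! k \<and> j < [n] ! k then ?P k i j G else 0) 0 =
        block_diag G"
      using block_diag_in_mats by (auto simp: fun_eq_iff mats_def)
    ultimately show ?thesis
      using block_diag_GL[OF Gk] by (simp add: mflag_def[of "[n]"] Let_def)
  qed
  then show "\<exists>P q. q \<in> polyfun \<and> (\<forall>k i j. P k i j \<in> polyfun) \<and> q G0 \<noteq> 0 \<and>
      (\<forall>G \<in> lifts ?ms (prod_Pet ?ms). q G \<noteq> 0 \<longrightarrow>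
        (let H = \<lambda>k i j. if k < length [n] \<and> i < [n] ! k \<and> j < [n] ! k then P k i j G else 0
         in (\<forall>k < length [n]. H k \<in> GL ([n] ! k)) \<and> mflag [n] H = inv_into XJ_points block_flags (mflag ?ms G)))"
    by (intro exI[of _ ?P] exI[of _ "\<lambda>_. 1"]) (auto intro: polyfun.intros block_diag_polyfun)
qed

lemma XJ_points_iso_prod_Pet:
  "var_iso [n] XJ_points (map (\<lambda>A. card A + 1) Js) (prod_Pet (map (\<lambda>A. card A + 1) Js))"
  unfolding var_iso_def using block_flags_bij block_flags_morphism block_flags_inverse_morphism by blast

end

theorem corollary3p6:
  fixes n :: nat and J :: "nat set" and Js :: "nat set list"
  assumes "J \<subseteq> {1..n - 1}"
    and "\<forall>A \<in> set Js. A \<noteq> {} \<and> (\<exists>a b. A = {a..b})"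
    and "\<Union> (set Js) = J"
    and "\<forall>k < length Js. \<forall>l < length Js. k \<noteq> l \<longrightarrow> Js ! k \<inter> Js ! l = {}"
    and "\<forall>k < length Js. \<forall>l < length Js. k \<noteq> l \<longrightarrow> (\<forall>i \<in> Js ! k. i + 1 \<notin> Js ! l)"
  shows "var_iso [n] {[F] | F. F \<in> XJ n J} (map (\<lambda>A. card A + 1) Js)
           (prod_Pet (map (\<lambda>A. card A + 1) Js))"
proof -
  interpret block_decomposition n J Js
    by unfold_locales (use assms in auto)
  show ?thesis
    using XJ_points_iso_prod_Pet unfolding XJ_points_def .
qed

end
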